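(* Let $c_k\in(0,1)$, $l_k>0$ decreasing to $0$, $I_k$ the open interval of length $l_k$ centered at $c_k$, and assume (A1), (A2), (A3) below, with $q(n)$ the sequence appearing there. Let $f$ be a positive continuous function on $[0,1]$, $\mu_k=\frac{1}{|I_k|}f(x)\,dx|_{I_k}$ (with $dx$ Lebesgue measure restricted to $[0,1]$), $\mu_{\mathcal{A}_n}=\frac{1}{\#\mathcal{A}_n}\sum_{k\in\mathcal{A}_n}\mu_k$, $V_n=\bigcup_{k\in\mathcal{A}_n}I_k$, $\hat\mu_n=\mu_{\mathcal{A}_n}/\mu_{\mathcal{A}_n}(V_n)$, and $\mathcal{B}_m=\{0,\dots,q(m)-1\}$. Then, as $m\to\infty$, $$\frac{1}{(\#\mathcal{B}_m)^2}\sum_{s,t\in\mathcal{B}_m,\,s\ne t}I(\hat\mu_{2^sm},\hat\mu_{2^tm})\to\frac{I(f(x)\phi(x)\,dx)}{\left(\int_0^1 f\phi\,dx\right)^2}.$$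
   Context: $I(\nu,\mu)=\iint(-\log|z-w|)\,d\nu(z)\,d\mu(w)$, $I(\mu)=I(\mu,\mu)$. Notation: $\mathcal{A}_n=\{n,\dots,2n-1\}$, $\mathcal{A}_{n,q}=\mathcal{A}_n\cup\mathcal{A}_{2n}\cup\cdots\cup\mathcal{A}_{2^qn}$. (A1) There is $\phi\in L^1([0,1],dx)$, $\phi>0$ a.e., with $\frac{1}{\#\mathcal{A}_n}\sum_{k\in\mathcal{A}_n}g(c_k)\to\int_0^1 g\phi\,dx$ for every $g\in C([0,1])$; $\phi$ in the claim is this function. There are integers $q(n)\to\infty$ such that: (A2) for every $\varepsilon>0$ there is $\delta>0$ such that for all large $n$ and all $n',n''\in\{n,2n,\dots,2^{q(n)}n\}$, $\frac{1}{\#(\mathcal{A}_{n'}\times\mathcal{A}_{n''})}\sum_{i\in\mathcal{A}_{n'},j\in\mathcal{A}_{n''},\,i\neq j,\,|c_i-c_j|<\delta}(-\log|c_i-c_j|)<\varepsilon$; (A3) for every $\varepsilon>0$, for all large $n$ and all $i\ne j$ in $\mathcal{A}_{n,q(n)}$, $\frac{l_i+l_j}{2|c_i-c_j|}<\varepsilon$. *)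

theory Defs
  imports "HOL-Analysis.Analysis"
begin

definition blockA :: "nat \<Rightarrow> nat set" where
  "blockA n = {n..<2*n}"

definition blockAq :: "nat \<Rightarrow> nat \<Rightarrow> nat set" where
  "blockAq n q = (\<Union>a\<le>q. blockA (2^a * n))"

definition interv :: "(nat \<Rightarrow> real) \<Rightarrow> (nat \<Rightarrow> real) \<Rightarrow> nat \<Rightarrow> real set" where
  "interv c l k = {c k - l k / 2 <..< c k + l k / 2}"

text \<open>Logarithmic mutual energy I(nu,mu) = double integral of -log|z-w|.
  All measures used below live on [0,1], where the kernel is nonnegative,
  so the nonnegative (ennreal-valued) integral is used.\<close>
definition log_energy :: "real measure \<Rightarrow> real measure \<Rightarrow> ennreal" where
  "log_energy \<nu> \<mu> = (\<integral>\<^sup>+ z. (\<integral>\<^sup>+ w. ennreal (- ln \<bar>z - w\<bar>) \<partial>\<mu>) \<partial>\<nu>)"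

definition densA :: "(nat \<Rightarrow> real) \<Rightarrow> (nat \<Rightarrow> real) \<Rightarrow> (real \<Rightarrow> real) \<Rightarrow> nat \<Rightarrow> real \<Rightarrow> real" where
  "densA c l f n x = (1 / real (card (blockA n))) *
     (\<Sum>k\<in>blockA n. f x / l k * indicator (interv c l k \<inter> {0..1}) x)"

definition muA :: "(nat \<Rightarrow> real) \<Rightarrow> (nat \<Rightarrow> real) \<Rightarrow> (real \<Rightarrow> real) \<Rightarrow> nat \<Rightarrow> real measure" where
  "muA c l f n = density lborel (\<lambda>x. ennreal (densA c l f n x))"

definition Vset :: "(nat \<Rightarrow> real) \<Rightarrow> (nat \<Rightarrow> real) \<Rightarrow> nat \<Rightarrow> real set" where
  "Vset c l n = (\<Union>k\<in>blockA n. interv c l k)"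

definition muhat :: "(nat \<Rightarrow> real) \<Rightarrow> (nat \<Rightarrow> real) \<Rightarrow> (real \<Rightarrow> real) \<Rightarrow> nat \<Rightarrow> real measure" where
  "muhat c l f n = density lborel
     (\<lambda>x. ennreal (densA c l f n x) / emeasure (muA c l f n) (Vset c l n))"

end

(*
  Each normalised measure mu_n is a sum of narrow bumps, carried by the intervals I_k, k in A_n, of
  mass m_k close to f(c_k). For s ~= t the blocks A_(2^s m) and A_(2^t m) are disjoint and, by (A3),
  points of I_i and I_j are at distance (1 +- e)|c_i - c_j|; so I(mu_(2^s m), mu_(2^t m)) is, up to
  O(e), the discrete energy  sum m_i m_j (-log |c_i - c_j|) / (sum m_i)(sum m_j).
  Assumption (A1), extended by Stone-Weierstrass to continuous kernels of two variables, turns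
  double block averages of continuous kernels into integrals against phi(x) phi(y) dx dy. The
  logarithmic kernel is truncated at distance eta, and (A2) controls the pairs closer than eta,
  both in the discrete sums and, through monotone convergence, in I(f phi dx). Finally, averaging
  over the q(q - 1) pairs s ~= t and dividing by q^2 only costs a factor 1 - 1/q.
*)

theory Submission
  imports Defs
begin

lemma minus_ln_nonneg: "0 \<le> (x::real) \<Longrightarrow> x \<le> 1 \<Longrightarrow> 0 \<le> - ln x"
  by (cases "x = 0") auto

inductive sum_of_products :: "(real \<times> real \<Rightarrow> real) \<Rightarrow> bool" where
  product: "continuous_on UNIV a \<Longrightarrow> continuous_on UNIV b \<Longrightarrow>
    sum_of_products (\<lambda>p. a (fst p) * b (snd p))"
| add: "sum_of_products g \<Longrightarrow> sum_of_products h \<Longrightarrow> sum_of_products (\<lambda>p. g p + h p)"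

lemma sum_of_products_mult:
  "sum_of_products g \<Longrightarrow> sum_of_products h \<Longrightarrow> sum_of_products (\<lambda>p. g p * h p)"
proof (induction g arbitrary: h rule: sum_of_products.induct)
  case (product a b)
  from product.prems show ?case
  proof (induction h rule: sum_of_products.induct)
    case (product a' b')
    have "sum_of_products (\<lambda>p. (\<lambda>x. a x * a' x) (fst p) * (\<lambda>y. b y * b' y) (snd p))"
      using product.hyps \<open>continuous_on UNIV a\<close> \<open>continuous_on UNIV b\<close>
      by (intro sum_of_products.product continuous_intros) auto
    then show ?case by (simp add: algebra_simps)
  next
    case (add g h)
    then have "sum_of_products (\<lambda>p. a (fst p) * b (snd p) * g p + a (fst p) * b (snd p) * h p)"
      by (intro sum_of_products.add)
    then show ?case by (simp add: algebra_simps)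
  qed
next
  case (add g1 g2)
  then have "sum_of_products (\<lambda>p. g1 p * h p + g2 p * h p)" by (intro sum_of_products.add) auto
  then show ?case by (simp add: algebra_simps)
qed

lemma sum_of_products_continuous: "sum_of_products g \<Longrightarrow> continuous_on UNIV g"
proof (induction rule: sum_of_products.induct)
  case (product a b)
  have "continuous_on UNIV (\<lambda>p::real \<times> real. a (fst p))"
    by (rule continuous_on_compose2[OF product(1)]) (auto intro: continuous_intros)
  moreover have "continuous_on UNIV (\<lambda>p::real \<times> real. b (snd p))"
    by (rule continuous_on_compose2[OF product(2)]) (auto intro: continuous_intros)
  ultimately show ?case by (intro continuous_intros)
qed (auto intro: continuous_intros)

lemma real_polynomial_function_sum_of_products:
  "real_polynomial_function g \<Longrightarrow> sum_of_products g"
proof (induction rule: real_polynomial_function.induct)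
  case (linear h)
  have cont: "continuous_on UNIV h" using linear_continuous_on[OF linear] .
  have "h p = h (fst p, 0) * 1 + 1 * h (0, snd p)" for p
    using linear_add[OF bounded_linear.linear[OF linear], of "(fst p, 0)" "(0, snd p)"] by simp
  then have "h = (\<lambda>p. (\<lambda>x. h (x, 0)) (fst p) * (\<lambda>_. 1) (snd p) + (\<lambda>_. 1) (fst p) * (\<lambda>y. h (0, y)) (snd p))"
    by (intro ext)
  moreover have "sum_of_products (\<lambda>p. (\<lambda>x. h (x, 0)) (fst p) * (\<lambda>_. 1) (snd p) + (\<lambda>_. 1) (fst p) * (\<lambda>y. h (0, y)) (snd p))"
    by (intro sum_of_products.intros continuous_intros continuous_on_compose2[OF cont]) auto
  ultimately show ?case by simp
next
  case (const c)
  have "sum_of_products (\<lambda>p. (\<lambda>_. c) (fst p) * (\<lambda>_. 1) (snd p))"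
    by (intro sum_of_products.product continuous_intros)
  then show ?case by simp
qed (auto intro: sum_of_products.add sum_of_products_mult)

definition trunc_level :: "nat \<Rightarrow> real" where
  "trunc_level k = 1 / (real k + 1)"

lemma trunc_level_pos: "0 < trunc_level k"
  and trunc_level_le_1: "trunc_level k \<le> 1"
  by (auto simp: trunc_level_def)

lemma trunc_level_antimono: "k \<le> k' \<Longrightarrow> trunc_level k' \<le> trunc_level k"
  by (auto simp: trunc_level_def frac_le)

lemma trunc_level_eventually_le: "0 < d \<Longrightarrow> \<exists>K. \<forall>k\<ge>K. trunc_level k \<le> d"
proof -
  assume d: "0 < d"
  obtain K :: nat where K: "1 / d < K" using reals_Archimedean2 by blast
  have "trunc_level k \<le> d" if "k \<ge> K" for k
  proof -
    have "1 / d < real k + 1" using K that by linarith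
    then have "1 < d * (real k + 1)" using d by (simp add: field_simps)
    then show ?thesis unfolding trunc_level_def using d by (simp add: field_simps)
  qed
  then show ?thesis by blast
qed

definition trunc_log :: "nat \<Rightarrow> real \<times> real \<Rightarrow> real" where
  "trunc_log k p = - ln (min 1 (max \<bar>fst p - snd p\<bar> (trunc_level k)))"

lemma trunc_log_continuous: "continuous_on UNIV (trunc_log k)"
  unfolding trunc_log_def using trunc_level_pos[of k]
  by (intro continuous_intros) auto

lemma trunc_log_nonneg: "0 \<le> trunc_log k p"
  unfolding trunc_log_def using trunc_level_pos[of k] by (intro minus_ln_nonneg) auto

lemma trunc_log_mono: "k \<le> k' \<Longrightarrow> trunc_log k p \<le> trunc_log k' p"
  unfolding trunc_log_def using trunc_level_pos[of k] trunc_level_pos[of k'] trunc_level_antimono[of k k']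
  by (auto simp: ln_le_cancel_iff)

lemma trunc_log_le_bound: "trunc_log k p \<le> - ln (trunc_level k)"
  unfolding trunc_log_def using trunc_level_pos[of k] trunc_level_le_1[of k]
  by (simp add: ln_le_cancel_iff)

lemma trunc_log_le_minus_ln: "x \<noteq> y \<Longrightarrow> \<bar>x - y\<bar> \<le> 1 \<Longrightarrow> trunc_log k (x, y) \<le> - ln \<bar>x - y\<bar>"
  unfolding trunc_log_def using trunc_level_pos[of k] by (auto simp: ln_le_cancel_iff)

lemma trunc_log_eq_minus_ln:
  "trunc_level k \<le> \<bar>x - y\<bar> \<Longrightarrow> \<bar>x - y\<bar> \<le> 1 \<Longrightarrow> trunc_log k (x, y) = - ln \<bar>x - y\<bar>"
  unfolding trunc_log_def by (simp add: max_def min_def)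

lemma trunc_log_increment_le:
  assumes "x \<noteq> y" "\<bar>x - y\<bar> \<le> 1" "k0 \<le> k"
  shows "trunc_log k (x, y) - trunc_log k0 (x, y) \<le>
    (if \<bar>x - y\<bar> < trunc_level k0 then - ln \<bar>x - y\<bar> else 0)"
proof (cases "\<bar>x - y\<bar> < trunc_level k0")
  case True
  then show ?thesis
    using trunc_log_le_minus_ln[OF assms(1,2), of k] trunc_log_nonneg[of k0 "(x, y)"] by simp
next
  case False
  then have "trunc_level k \<le> \<bar>x - y\<bar>" using trunc_level_antimono[OF assms(3)] by linarith
  then show ?thesis using False trunc_log_eq_minus_ln[of k0 x y] trunc_log_eq_minus_ln[of k x y] assms
    by simp
qed

definition edge_cutoff :: "real \<Rightarrow> real \<Rightarrow> real" where
  "edge_cutoff \<eta> x = min 1 (max 0 (2 - x / \<eta>)) + min 1 (max 0 (2 - (1 - x) / \<eta>))"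

lemma edge_cutoff_continuous: "0 < \<eta> \<Longrightarrow> continuous_on S (edge_cutoff \<eta>)"
  unfolding edge_cutoff_def by (intro continuous_intros) auto

lemma edge_cutoff_nonneg: "0 \<le> edge_cutoff \<eta> x"
  and edge_cutoff_le_2: "edge_cutoff \<eta> x \<le> 2"
  unfolding edge_cutoff_def by auto

lemma edge_cutoff_ge_1:
  assumes "0 < \<eta>" "x < \<eta> \<or> 1 - \<eta> < x"
  shows "1 \<le> edge_cutoff \<eta> x"
  using assms by (auto simp: edge_cutoff_def divide_less_eq)

lemma edge_cutoff_eq_0:
  assumes "0 < \<eta>" "2 * \<eta> \<le> x" "2 * \<eta> \<le> 1 - x"
  shows "edge_cutoff \<eta> x = 0"
proof -
  have "2 \<le> x / \<eta>" "2 \<le> (1 - x) / \<eta>" using assms by (simp_all add: le_divide_eq)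
  then show ?thesis unfolding edge_cutoff_def by simp
qed

text \<open>The hypotheses put \<open>|x - y|\<close> between \<open>(1 - e)|c\<^sub>i - c\<^sub>j|\<close> and \<open>(1 + e)|c\<^sub>i - c\<^sub>j|\<close>.\<close>
lemma minus_ln_dist_perturb:
  fixes x y ci cj li lj e :: real
  assumes x: "\<bar>x - ci\<bar> < li / 2" and y: "\<bar>y - cj\<bar> < lj / 2"
    and e: "0 < e" "e \<le> 1/2" and sep: "li + lj < e * (2 * \<bar>ci - cj\<bar>)"
  shows "- ln \<bar>ci - cj\<bar> - e \<le> - ln \<bar>x - y\<bar>" "- ln \<bar>x - y\<bar> \<le> - ln \<bar>ci - cj\<bar> + 2 * e"
proof -
  define d where "d = \<bar>ci - cj\<bar>"
  have "0 \<le> li" "0 \<le> lj" using x y by linarith+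
  then have "0 < e * (2 * d)" using sep unfolding d_def by linarith
  then have d: "0 < d" using e by (simp add: zero_less_mult_iff)
  have close: "li / 2 + lj / 2 < e * d" using sep unfolding d_def by (simp add: field_simps)
  have "d \<le> \<bar>x - y\<bar> + \<bar>x - ci\<bar> + \<bar>y - cj\<bar>" "\<bar>x - y\<bar> \<le> d + \<bar>x - ci\<bar> + \<bar>y - cj\<bar>"
    unfolding d_def by linarith+
  then have lo: "d * (1 - e) < \<bar>x - y\<bar>" and hi: "\<bar>x - y\<bar> < d * (1 + e)"
    using x y close by (simp_all add: algebra_simps)
  have "0 < d * (1 - e)" using d e by simp
  with lo have xy: "0 < \<bar>x - y\<bar>" by linarith
  have "ln \<bar>x - y\<bar> \<le> ln (d * (1 + e))" using hi xy by simp
  also have "\<dots> = ln d + ln (1 + e)" using d e by (simp add: ln_mult)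
  also have "\<dots> \<le> ln d + e" using ln_add_one_self_le_self[of e] e by simp
  finally show "- ln \<bar>ci - cj\<bar> - e \<le> - ln \<bar>x - y\<bar>" unfolding d_def by simp
  have "ln d + ln (1 - e) = ln (d * (1 - e))" using d e by (simp add: ln_mult)
  also have "\<dots> \<le> ln \<bar>x - y\<bar>" using lo \<open>0 < d * (1 - e)\<close> by simp
  finally have "ln d + ln (1 - e) \<le> ln \<bar>x - y\<bar>" .
  moreover have "- e - 2 * e\<^sup>2 \<le> ln (1 - e)" using ln_one_minus_pos_lower_bound[of e] e by simp
  moreover have "2 * e\<^sup>2 \<le> e" using e by (simp add: power2_eq_square mult_le_cancel_right1)
  ultimately show "- ln \<bar>x - y\<bar> \<le> - ln \<bar>ci - cj\<bar> + 2 * e" unfolding d_def by linarith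
qed

lemma ratio_eps_delta:
  fixes A B :: real
  assumes "0 < B" "0 < \<epsilon>"
  shows "\<exists>\<delta>>0. \<forall>a b c. \<bar>a - A\<bar> < \<delta> \<and> \<bar>b - B\<bar> < \<delta> \<and> \<bar>c - B\<bar> < \<delta> \<longrightarrow>
    \<bar>a / (b * c) - A / (B * B)\<bar> < \<epsilon>"
proof -
  define g where "g p = fst p / (fst (snd p) * snd (snd p))" for p :: "real \<times> real \<times> real"
  have "continuous (at (A, B, B)) g"
    unfolding g_def using assms(1) by (intro continuous_intros) auto
  then obtain d where d: "d > 0" "\<forall>p. dist p (A, B, B) < d \<longrightarrow> dist (g p) (g (A, B, B)) < \<epsilon>"
    unfolding continuous_at_eps_delta using assms(2) by blast
  have dist_bound: "dist (a, b, c) (A, B, B) \<le> \<bar>a - A\<bar> + \<bar>b - B\<bar> + \<bar>c - B\<bar>" for a b c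
  proof -
    have "dist (b, c) (B, B) \<le> \<bar>b - B\<bar> + \<bar>c - B\<bar>"
      unfolding dist_Pair_Pair using sqrt_sum_squares_le_sum_abs[of "dist b B" "dist c B"]
      by (simp add: dist_real_def)
    moreover have "dist (a, b, c) (A, B, B) \<le> \<bar>a - A\<bar> + dist (b, c) (B, B)"
      unfolding dist_Pair_Pair[of a "(b, c)"] using sqrt_sum_squares_le_sum_abs[of "dist a A" "dist (b, c) (B, B)"]
      by (simp add: dist_real_def)
    ultimately show ?thesis by linarith
  qed
  have "\<bar>a / (b * c) - A / (B * B)\<bar> < \<epsilon>"
    if "\<bar>a - A\<bar> < d / 3" "\<bar>b - B\<bar> < d / 3" "\<bar>c - B\<bar> < d / 3" for a b c
  proof -
    have "dist (a, b, c) (A, B, B) < d" using dist_bound[of a b c] that by linarith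
    then show ?thesis using d(2) by (auto simp: g_def dist_real_def)
  qed
  then show ?thesis using d(1) by (intro exI[of _ "d / 3"]) auto
qed

lemma finite_blockA [simp]: "finite (blockA n)"
  by (simp add: blockA_def)

lemma card_blockA [simp]: "card (blockA n) = n"
  by (simp add: blockA_def)

lemma blockA_ge_1: "i \<in> blockA n \<Longrightarrow> 1 \<le> n \<Longrightarrow> 1 \<le> i"
  by (auto simp: blockA_def)

lemma blockA_subset_blockAq: "a \<le> q \<Longrightarrow> blockA (2^a * n) \<subseteq> blockAq n q"
  unfolding blockAq_def by auto

lemma blockA_pow2_disjoint:
  assumes "s \<noteq> t"
  shows "blockA (2^s * m) \<inter> blockA (2^t * m) = {}"
proof -
  have "2 * (2^s * m) \<le> 2^t * m" if "s < t" for s t :: nat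
  proof -
    have "2 ^ Suc s \<le> (2::nat) ^ t" using that by (intro power_increasing) auto
    then show ?thesis by (metis mult_le_mono1 power_Suc mult.assoc)
  qed
  then show ?thesis using assms unfolding blockA_def
    by (cases "s < t") (auto simp: not_less_iff_gr_or_eq)
qed

lemma sum_off_diagonal_const:
  assumes "0 \<le> v" "1 \<le> Q"
  shows "(\<Sum>s\<in>{0..<Q}. \<Sum>t\<in>{0..<Q} - {s}. ennreal v) = ennreal (real Q * (real Q - 1) * v)"
proof -
  have "(\<Sum>t\<in>{0..<Q} - {s}. ennreal v) = ennreal ((real Q - 1) * v)" if "s < Q" for s
    using that assms by (simp add: ennreal_of_nat_eq_real_of_nat ennreal_mult of_nat_diff)
  then show ?thesis
    using assms by (simp add: ennreal_of_nat_eq_real_of_nat ennreal_mult mult.assoc)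
qed

text \<open>Averaging over the \<open>Q(Q - 1)\<close> off-diagonal pairs but dividing by \<open>Q\<^sup>2\<close> costs at most
  the factor \<open>1 - 1/Q\<close>.\<close>
lemma off_diagonal_average_bounds:
  fixes E :: "nat \<Rightarrow> nat \<Rightarrow> ennreal"
  assumes Q: "1 \<le> Q" and lo: "0 \<le> lo" and hi: "lo \<le> hi"
    and bounds: "\<And>s t. s < Q \<Longrightarrow> t < Q \<Longrightarrow> s \<noteq> t \<Longrightarrow> ennreal lo \<le> E s t \<and> E s t \<le> ennreal hi"
  shows "ennreal (lo - lo / real Q) \<le> (\<Sum>s\<in>{0..<Q}. \<Sum>t\<in>{0..<Q} - {s}. E s t) / ennreal ((real (card {0..<Q}))^2)"
    and "(\<Sum>s\<in>{0..<Q}. \<Sum>t\<in>{0..<Q} - {s}. E s t) / ennreal ((real (card {0..<Q}))^2) \<le> ennreal hi"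
proof -
  let ?avg = "\<lambda>E. (\<Sum>s\<in>{0..<Q}. \<Sum>t\<in>{0..<Q} - {s}. E s t) / ennreal ((real (card {0..<Q}))^2)"
  have avg_const: "?avg (\<lambda>_ _. ennreal v) = ennreal (v - v / real Q)" if "0 \<le> v" for v
  proof -
    have "real Q * (real Q - 1) * v / (real Q)^2 = v - v / real Q"
      using Q by (simp add: power2_eq_square field_simps)
    moreover have "?avg (\<lambda>_ _. ennreal v) = ennreal (real Q * (real Q - 1) * v) / ennreal ((real Q)^2)"
      by (subst sum_off_diagonal_const[OF that Q]) simp
    ultimately show ?thesis using that Q by (simp add: divide_ennreal)
  qed
  have "ennreal (lo - lo / real Q) = ?avg (\<lambda>_ _. ennreal lo)" by (rule avg_const[OF lo, symmetric])
  also have "\<dots> \<le> ?avg E" using bounds by (intro divide_right_mono_ennreal sum_mono) auto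
  finally show "ennreal (lo - lo / real Q) \<le> ?avg E" .
  have "?avg E \<le> ?avg (\<lambda>_ _. ennreal hi)" using bounds by (intro divide_right_mono_ennreal sum_mono) auto
  also have "\<dots> = ennreal (hi - hi / real Q)" using lo hi by (intro avg_const) simp
  also have "\<dots> \<le> ennreal hi" using lo hi by (intro ennreal_leI) simp
  finally show "?avg E \<le> ennreal hi" .
qed

lemma ennreal_tendsto_squeeze:
  fixes X :: "nat \<Rightarrow> ennreal"
  assumes "0 \<le> L"
    and bounds: "\<And>\<tau>. \<tau> > 0 \<Longrightarrow> \<forall>\<^sub>F m in sequentially. ennreal (L - \<tau>) \<le> X m \<and> X m \<le> ennreal (L + \<tau>)"
  shows "X \<longlonglongrightarrow> ennreal L"
proof -
  have "(\<lambda>m. enn2real (X m)) \<longlonglongrightarrow> L"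
  proof (rule tendstoI)
    fix \<tau> :: real assume "0 < \<tau>"
    then have "0 < \<tau> / 2" by simp
    from bounds[OF this] show "\<forall>\<^sub>F m in sequentially. dist (enn2real (X m)) L < \<tau>"
    proof eventually_elim
      case (elim m)
      then have fin: "X m < top" using order_le_less_trans by fastforce
      have "L - \<tau> / 2 \<le> enn2real (X m)"
      proof (cases "L - \<tau> / 2 \<le> 0")
        case False
        then show ?thesis using enn2real_mono[of "ennreal (L - \<tau> / 2)" "X m"] elim fin by simp
      qed (use enn2real_nonneg[of "X m"] in linarith)
      moreover have "enn2real (X m) \<le> enn2real (ennreal (L + \<tau> / 2))"
        using elim by (intro enn2real_mono) auto
      then have "enn2real (X m) \<le> L + \<tau> / 2" using \<open>0 \<le> L\<close> \<open>0 < \<tau>\<close> by (simp del: ennreal_plus)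
      ultimately show ?case using \<open>0 < \<tau>\<close> by (simp add: dist_real_def abs_less_iff)
    qed
  qed
  then have "(\<lambda>m. ennreal (enn2real (X m))) \<longlonglongrightarrow> ennreal L" by (rule tendsto_ennrealI)
  moreover have "\<forall>\<^sub>F m in sequentially. ennreal (enn2real (X m)) = X m"
    using bounds[OF zero_less_one]
    by eventually_elim (metis ennreal_enn2real ennreal_less_top order_le_less_trans)
  ultimately show ?thesis by (rule Lim_transform_eventually)
qed

lemma continuous_on_section:
  fixes G :: "'a::topological_space \<times> 'b::topological_space \<Rightarrow> 'c::topological_space"
  shows "continuous_on UNIV G \<Longrightarrow> continuous_on S (\<lambda>y. G (x, y))"
  by (rule continuous_on_compose2[of UNIV G]) (auto intro: continuous_intros)

lemma bounded_on_unit_square: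
  assumes "continuous_on UNIV (G :: real \<times> real \<Rightarrow> real)"
  shows "\<exists>B. \<forall>x\<in>{0..1}. \<forall>y\<in>{0..1}. \<bar>G (x, y)\<bar> \<le> B"
proof -
  have "bounded (G ` ({0..1} \<times> {0..1}))"
    using assms by (intro compact_imp_bounded compact_continuous_image compact_Times)
      (auto intro: continuous_on_subset)
  then show ?thesis unfolding bounded_iff by force
qed

lemma borel_measurable_continuous_on_pair:
  "continuous_on UNIV (G :: real \<times> real \<Rightarrow> real) \<Longrightarrow> G \<in> borel_measurable (lborel \<Otimes>\<^sub>M lborel)"
  by (simp add: lborel_prod borel_measurable_continuous_onI)

lemma le_pow2_mult: "N \<le> n \<Longrightarrow> N \<le> 2^s * (n::nat)"
  by (metis le_trans mult_le_mono1 mult_1 one_le_numeral one_le_power)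

lemma eventually_sequentially_pow2_mult:
  "(\<forall>\<^sub>F n in sequentially. P n) \<Longrightarrow> \<forall>\<^sub>F m in sequentially. \<forall>s. P (2^s * m)"
  unfolding eventually_sequentially using le_pow2_mult by blast

lemma eventually_prod_sequentially_pow2_mult:
  assumes "\<forall>\<^sub>F p in sequentially \<times>\<^sub>F sequentially. P (fst p) (snd p)"
  shows "\<forall>\<^sub>F m in sequentially. \<forall>s t. P (2^s * m) (2^t * m)"
proof -
  obtain N where "\<forall>n\<ge>N. \<forall>m\<ge>N. P m n" using assms unfolding eventually_prod_sequentially by auto
  then show ?thesis unfolding eventually_sequentially using le_pow2_mult by blast
qed

locale equidistributed_intervals =
  fixes c l :: "nat \<Rightarrow> real" and \<phi> f :: "real \<Rightarrow> real" and q :: "nat \<Rightarrow> nat"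
  assumes c_in: "\<forall>k\<ge>1. c k \<in> {0<..<1}"
    and l_pos: "\<forall>k\<ge>1. l k > 0"
    and l_decr: "\<forall>k\<ge>1. l (Suc k) \<le> l k"
    and l_lim: "l \<longlonglongrightarrow> 0"
    and A1_int: "set_integrable lborel {0..1} \<phi>"
    and A1_pos: "AE x in lborel. x \<in> {0..1} \<longrightarrow> \<phi> x > 0"
    and A1_lim: "\<forall>g. continuous_on {0..1} g \<longrightarrow>
        (\<lambda>n. (1 / real (card (blockA n))) * (\<Sum>k\<in>blockA n. g (c k)))
          \<longlonglongrightarrow> (LINT x:{0..1}|lborel. g x * \<phi> x)"
    and q_lim: "filterlim q at_top sequentially"
    and A2: "\<forall>\<epsilon>>0. \<exists>\<delta>>0. \<forall>\<^sub>F n in sequentially. \<forall>a\<le>q n. \<forall>b\<le>q n.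
        (1 / real (card (blockA (2^a*n) \<times> blockA (2^b*n)))) *
        (\<Sum>i\<in>blockA (2^a*n). \<Sum>j\<in>{j\<in>blockA (2^b*n). i \<noteq> j \<and> \<bar>c i - c j\<bar> < \<delta>}.
            - ln \<bar>c i - c j\<bar>) < \<epsilon>"
    and A3: "\<forall>\<epsilon>>0. \<forall>\<^sub>F n in sequentially. \<forall>i\<in>blockAq n (q n). \<forall>j\<in>blockAq n (q n).
        i \<noteq> j \<longrightarrow> l i + l j < \<epsilon> * (2 * \<bar>c i - c j\<bar>)"
    and f_cont: "continuous_on {0..1} f"
    and f_pos: "\<forall>x\<in>{0..1}. f x > 0"
begin

definition phi0 :: "real \<Rightarrow> real" where
  "phi0 x = max 0 (indicator {0..1} x * \<phi> x)"

definition f_ext :: "real \<Rightarrow> real" where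
  "f_ext x = f (max 0 (min 1 x))"

definition f_min :: real where
  "f_min = Inf (f ` {0..1})"

definition f_max :: real where
  "f_max = Sup (f ` {0..1})"

definition block_avg :: "nat \<Rightarrow> (real \<Rightarrow> real) \<Rightarrow> real" where
  "block_avg n g = (1 / real (card (blockA n))) * (\<Sum>k\<in>blockA n. g (c k))"

lemma c_in_blockA: "k \<in> blockA n \<Longrightarrow> 1 \<le> n \<Longrightarrow> c k \<in> {0<..<1}"
  using c_in blockA_ge_1 by blast

lemma dist_c_le_1: "i \<in> blockA n1 \<Longrightarrow> j \<in> blockA n2 \<Longrightarrow> 1 \<le> n1 \<Longrightarrow> 1 \<le> n2 \<Longrightarrow> \<bar>c i - c j\<bar> \<le> 1"
  using c_in_blockA[of i n1] c_in_blockA[of j n2] by auto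

lemma borel_measurable_indicator_phi: "(\<lambda>x. indicator {0..1} x * \<phi> x) \<in> borel_measurable lborel"
  using A1_int unfolding set_integrable_def by (auto dest: borel_measurable_integrable)

lemma phi0_measurable [measurable]: "phi0 \<in> borel_measurable lborel"
  unfolding phi0_def using borel_measurable_indicator_phi by measurable

lemma phi0_nonneg: "0 \<le> phi0 x"
  by (simp add: phi0_def)

lemma phi0_outside: "x \<notin> {0..1} \<Longrightarrow> phi0 x = 0"
  by (simp add: phi0_def)

lemma integrable_phi0: "integrable lborel phi0"
  using A1_int unfolding set_integrable_def
  by (rule Bochner_Integration.integrable_bound) (auto simp: phi0_def)

lemma AE_phi0_eq: "AE x in lborel. indicator {0..1} x * \<phi> x = phi0 x"
  using A1_pos by eventually_elim (auto simp: phi0_def indicator_def)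

lemma f_ext_continuous: "continuous_on UNIV f_ext"
proof -
  have "continuous_on UNIV (\<lambda>x::real. max 0 (min 1 x))" by (intro continuous_intros)
  then show ?thesis unfolding f_ext_def by (rule continuous_on_compose2[OF f_cont]) auto
qed

lemma f_ext_measurable [measurable]: "f_ext \<in> borel_measurable borel"
  using f_ext_continuous by (simp add: borel_measurable_continuous_onI)

lemma f_ext_eq: "x \<in> {0..1} \<Longrightarrow> f_ext x = f x"
  by (simp add: f_ext_def)

lemma f_min_max: "0 < f_min \<and> (\<forall>x. f_min \<le> f_ext x \<and> f_ext x \<le> f_max)"
proof -
  obtain x0 where x0: "x0 \<in> {0..1}" "\<forall>y\<in>{0..1}. f x0 \<le> f y"
    using continuous_attains_inf[OF compact_Icc _ f_cont] by auto
  obtain x1 where x1: "x1 \<in> {0..1}" "\<forall>y\<in>{0..1}. f y \<le> f x1"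
    using continuous_attains_sup[OF compact_Icc _ f_cont] by auto
  have "f_min = f x0" unfolding f_min_def by (rule cInf_eq_minimum) (use x0 in auto)
  moreover have "f_max = f x1" unfolding f_max_def by (rule cSup_eq_maximum) (use x1 in auto)
  moreover have "max 0 (min 1 x) \<in> {0..1::real}" for x by simp
  ultimately show ?thesis using x0 x1 f_pos unfolding f_ext_def by auto
qed

lemma f_min_pos: "0 < f_min"
  and f_ext_ge_f_min: "f_min \<le> f_ext x"
  and f_ext_le_f_max: "f_ext x \<le> f_max"
  using f_min_max by auto

lemma f_ext_pos: "0 < f_ext x"
  using f_min_pos f_ext_ge_f_min[of x] by linarith

lemma f_max_pos: "0 < f_max"
  using f_ext_pos[of 0] f_ext_le_f_max[of 0] by linarith

lemma borel_measurable_mult_phi0: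
  assumes "continuous_on {0..1} g"
  shows "(\<lambda>x. g x * phi0 x) \<in> borel_measurable lborel"
proof -
  have "(\<lambda>x. indicator {0..1::real} x *\<^sub>R g x) \<in> borel_measurable borel"
    by (rule borel_measurable_continuous_on_indicator) (use assms in auto)
  moreover have "(\<lambda>x. g x * phi0 x) = (\<lambda>x. (indicator {0..1::real} x *\<^sub>R g x) * phi0 x)"
    by (auto simp: fun_eq_iff indicator_def phi0_def)
  ultimately show ?thesis by simp
qed

lemma integrable_mult_phi0:
  assumes "continuous_on {0..1} g"
  shows "integrable lborel (\<lambda>x. g x * phi0 x)"
proof -
  have "bounded (g ` {0..1})" using assms by (intro compact_imp_bounded compact_continuous_image) auto
  then obtain B where B: "\<forall>x\<in>{0..1::real}. \<bar>g x\<bar> \<le> B" unfolding bounded_iff by auto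
  show ?thesis
  proof (rule Bochner_Integration.integrable_bound[where f="\<lambda>x. B * phi0 x"])
    show "integrable lborel (\<lambda>x. B * phi0 x)" using integrable_phi0 by simp
    show "(\<lambda>x. g x * phi0 x) \<in> borel_measurable lborel" by (rule borel_measurable_mult_phi0[OF assms])
    have "norm (g x * phi0 x) \<le> norm (B * phi0 x)" for x
    proof (cases "x \<in> {0..1}")
      case True
      then have "\<bar>g x\<bar> \<le> B" using B by auto
      then show ?thesis using phi0_nonneg[of x] by (simp add: abs_mult mult_right_mono)
    qed (simp add: phi0_outside)
    then show "AE x in lborel. norm (g x * phi0 x) \<le> norm (B * phi0 x)" by simp
  qed
qed

lemma set_integral_phi_eq:
  assumes "continuous_on {0..1} g"
  shows "(LINT x:{0..1}|lborel. g x * \<phi> x) = (\<integral>x. g x * phi0 x \<partial>lborel)"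
proof -
  have g: "(\<lambda>x. indicator {0..1::real} x *\<^sub>R g x) \<in> borel_measurable borel"
    by (rule borel_measurable_continuous_on_indicator) (use assms in auto)
  have "(LINT x:{0..1}|lborel. g x * \<phi> x) =
      (\<integral>x. (indicator {0..1} x *\<^sub>R g x) * (indicator {0..1} x * \<phi> x) \<partial>lborel)"
    unfolding set_lebesgue_integral_def
    by (rule Bochner_Integration.integral_cong) (auto simp: indicator_def)
  also have "\<dots> = (\<integral>x. g x * phi0 x \<partial>lborel)"
  proof (rule integral_cong_AE)
    show "(\<lambda>x. (indicator {0..1} x *\<^sub>R g x) * (indicator {0..1} x * \<phi> x)) \<in> borel_measurable lborel"
      using g borel_measurable_indicator_phi by measurable
    show "(\<lambda>x. g x * phi0 x) \<in> borel_measurable lborel" by (rule borel_measurable_mult_phi0[OF assms])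
    show "AE x in lborel. indicator {0..1} x *\<^sub>R g x * (indicator {0..1} x * \<phi> x) = g x * phi0 x"
      using AE_phi0_eq by eventually_elim (auto simp: indicator_def phi0_def)
  qed
  finally show ?thesis .
qed

lemma block_avg_tendsto:
  "continuous_on {0..1} g \<Longrightarrow> (\<lambda>n. block_avg n g) \<longlonglongrightarrow> (\<integral>x. g x * phi0 x \<partial>lborel)"
  using A1_lim set_integral_phi_eq unfolding block_avg_def by metis

section \<open>Equidistribution of pairs of centres\<close>

definition block_avg2 :: "nat \<Rightarrow> nat \<Rightarrow> (real \<times> real \<Rightarrow> real) \<Rightarrow> real" where
  "block_avg2 n1 n2 G = (1 / (real (card (blockA n1)) * real (card (blockA n2)))) *
      (\<Sum>i\<in>blockA n1. \<Sum>j\<in>blockA n2. G (c i, c j))"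

definition phi_integral2 :: "(real \<times> real \<Rightarrow> real) \<Rightarrow> real" where
  "phi_integral2 G = (\<integral>x. phi0 x * (\<integral>y. G (x, y) * phi0 y \<partial>lborel) \<partial>lborel)"

definition phi_mass :: real where
  "phi_mass = (\<integral>x. phi0 x \<partial>lborel)"

lemma phi_mass_nonneg: "0 \<le> phi_mass"
  unfolding phi_mass_def by (simp add: phi0_nonneg)

lemma integrable_section_phi0:
  "continuous_on UNIV (G :: real \<times> real \<Rightarrow> real) \<Longrightarrow> integrable lborel (\<lambda>y. G (x, y) * phi0 y)"
  by (rule integrable_mult_phi0) (rule continuous_on_section)

lemma abs_section_integral_le:
  fixes G :: "real \<times> real \<Rightarrow> real"
  assumes "\<forall>y\<in>{0..1}. \<bar>G (x, y)\<bar> \<le> B" "continuous_on UNIV G"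
  shows "\<bar>\<integral>y. G (x, y) * phi0 y \<partial>lborel\<bar> \<le> B * phi_mass"
proof -
  have "norm (\<integral>y. G (x, y) * phi0 y \<partial>lborel) \<le> (\<integral>y. B * phi0 y \<partial>lborel)"
  proof (rule Bochner_Integration.integral_norm_bound_integral)
    show "integrable lborel (\<lambda>y. G (x, y) * phi0 y)" by (rule integrable_section_phi0[OF assms(2)])
    show "integrable lborel (\<lambda>y. B * phi0 y)" using integrable_phi0 by simp
    fix y show "norm (G (x, y) * phi0 y) \<le> B * phi0 y"
    proof (cases "y \<in> {0..1}")
      case True then show ?thesis using assms(1) phi0_nonneg[of y]
        by (simp add: abs_mult mult_right_mono)
    qed (simp add: phi0_outside)
  qed
  then show ?thesis unfolding phi_mass_def by simp
qed

lemma borel_measurable_section_integral: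
  assumes "continuous_on UNIV (G :: real \<times> real \<Rightarrow> real)"
  shows "(\<lambda>x. \<integral>y. G (x, y) * phi0 y \<partial>lborel) \<in> borel_measurable lborel"
proof -
  have [measurable]: "G \<in> borel_measurable (lborel \<Otimes>\<^sub>M lborel)"
    by (rule borel_measurable_continuous_on_pair[OF assms])
  have "(\<lambda>p. G p * phi0 (snd p)) \<in> borel_measurable (lborel \<Otimes>\<^sub>M lborel)" by measurable
  then have "case_prod (\<lambda>x y. G (x, y) * phi0 y) \<in> borel_measurable (lborel \<Otimes>\<^sub>M lborel)"
    by (simp add: case_prod_beta')
  then show ?thesis by (rule lborel.borel_measurable_lebesgue_integral)
qed

lemma abs_phi0_section_integral_le:
  assumes "continuous_on UNIV G" "\<forall>x\<in>{0..1}. \<forall>y\<in>{0..1}. \<bar>G (x, y)\<bar> \<le> B"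
  shows "norm (phi0 x * (\<integral>y. G (x, y) * phi0 y \<partial>lborel)) \<le> (B * phi_mass) * phi0 x"
proof (cases "x \<in> {0..1}")
  case True
  then have "\<bar>\<integral>y. G (x, y) * phi0 y \<partial>lborel\<bar> \<le> B * phi_mass"
    using assms(2) abs_section_integral_le[OF _ assms(1)] by blast
  then show ?thesis using phi0_nonneg[of x] by (simp add: abs_mult mult.commute mult_left_mono)
qed (simp add: phi0_outside)

lemma integrable_phi_integral2:
  assumes "continuous_on UNIV (G :: real \<times> real \<Rightarrow> real)"
  shows "integrable lborel (\<lambda>x. phi0 x * (\<integral>y. G (x, y) * phi0 y \<partial>lborel))"
proof -
  obtain B where B: "\<forall>x\<in>{0..1}. \<forall>y\<in>{0..1}. \<bar>G (x, y)\<bar> \<le> B"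
    using bounded_on_unit_square[OF assms] by blast
  show ?thesis
  proof (rule Bochner_Integration.integrable_bound[where f="\<lambda>x. (B * phi_mass) * phi0 x"])
    show "integrable lborel (\<lambda>x. (B * phi_mass) * phi0 x)" using integrable_phi0 by simp
    show "(\<lambda>x. phi0 x * (\<integral>y. G (x, y) * phi0 y \<partial>lborel)) \<in> borel_measurable lborel"
      using borel_measurable_section_integral[OF assms] by measurable
    show "AE x in lborel. norm (phi0 x * (\<integral>y. G (x, y) * phi0 y \<partial>lborel)) \<le> norm ((B * phi_mass) * phi0 x)"
      using abs_phi0_section_integral_le[OF assms B] by (intro AE_I2) (metis abs_ge_self order_trans real_norm_def)
  qed
qed

lemma phi_integral2_add:
  assumes "continuous_on UNIV G" "continuous_on UNIV H"
  shows "phi_integral2 (\<lambda>p. G p + H p) = phi_integral2 G + phi_integral2 H"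
proof -
  have "phi_integral2 (\<lambda>p. G p + H p) = (\<integral>x. phi0 x * (\<integral>y. G (x, y) * phi0 y \<partial>lborel) +
      phi0 x * (\<integral>y. H (x, y) * phi0 y \<partial>lborel) \<partial>lborel)"
    unfolding phi_integral2_def
    by (rule Bochner_Integration.integral_cong)
       (auto simp: distrib_left distrib_right integrable_section_phi0[OF assms(1)] integrable_section_phi0[OF assms(2)])
  also have "\<dots> = phi_integral2 G + phi_integral2 H"
    unfolding phi_integral2_def
    by (rule Bochner_Integration.integral_add[OF integrable_phi_integral2[OF assms(1)] integrable_phi_integral2[OF assms(2)]])
  finally show ?thesis .
qed

lemma phi_integral2_diff:
  assumes "continuous_on UNIV G" "continuous_on UNIV H"
  shows "phi_integral2 (\<lambda>p. G p - H p) = phi_integral2 G - phi_integral2 H"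
  using phi_integral2_add[of "\<lambda>p. G p - H p" H] assms by (simp add: continuous_on_diff)

lemma abs_phi_integral2_le:
  assumes "continuous_on UNIV G" "\<forall>x\<in>{0..1}. \<forall>y\<in>{0..1}. \<bar>G (x, y)\<bar> \<le> B"
  shows "\<bar>phi_integral2 G\<bar> \<le> B * phi_mass * phi_mass"
proof -
  have "norm (phi_integral2 G) \<le> (\<integral>x. (B * phi_mass) * phi0 x \<partial>lborel)"
    unfolding phi_integral2_def
    using integrable_phi_integral2[OF assms(1)] integrable_phi0 abs_phi0_section_integral_le[OF assms]
    by (intro Bochner_Integration.integral_norm_bound_integral) auto
  then show ?thesis unfolding phi_mass_def by (simp add: mult.commute mult.left_commute)
qed

lemma phi_integral2_product:
  "phi_integral2 (\<lambda>p. a (fst p) * b (snd p)) = (\<integral>x. a x * phi0 x \<partial>lborel) * (\<integral>y. b y * phi0 y \<partial>lborel)"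
proof -
  have "phi_integral2 (\<lambda>p. a (fst p) * b (snd p)) = (\<integral>x. (a x * phi0 x) * (\<integral>y. b y * phi0 y \<partial>lborel) \<partial>lborel)"
    unfolding phi_integral2_def
    by (rule Bochner_Integration.integral_cong) (auto simp: mult.assoc mult.left_commute)
  then show ?thesis by simp
qed

lemma block_avg2_add: "block_avg2 n1 n2 (\<lambda>p. G p + H p) = block_avg2 n1 n2 G + block_avg2 n1 n2 H"
  unfolding block_avg2_def by (simp add: sum.distrib distrib_left)

lemma block_avg2_product: "block_avg2 n1 n2 (\<lambda>p. a (fst p) * b (snd p)) = block_avg n1 a * block_avg n2 b"
  unfolding block_avg2_def block_avg_def by (simp add: sum_product)

lemma block_avg2_tendsto_sum_of_products:
  "sum_of_products G \<Longrightarrow>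
    ((\<lambda>p. block_avg2 (fst p) (snd p) G) \<longlongrightarrow> phi_integral2 G) (sequentially \<times>\<^sub>F sequentially)"
proof (induction rule: sum_of_products.induct)
  case (product a b)
  have "((\<lambda>p. block_avg (fst p) a * block_avg (snd p) b) \<longlongrightarrow>
      (\<integral>x. a x * phi0 x \<partial>lborel) * (\<integral>y. b y * phi0 y \<partial>lborel)) (sequentially \<times>\<^sub>F sequentially)"
    using product
    by (intro tendsto_mult filterlim_compose[OF block_avg_tendsto filterlim_fst]
        filterlim_compose[OF block_avg_tendsto filterlim_snd]) (auto intro: continuous_on_subset)
  then show ?case using phi_integral2_product block_avg2_product by simp
next
  case (add g h)
  then show ?case
    unfolding block_avg2_add phi_integral2_add[OF sum_of_products_continuous[OF add(1)] sum_of_products_continuous[OF add(2)]]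
    by (intro tendsto_add)
qed

lemma abs_block_avg2_diff_le:
  assumes "1 \<le> n1" "1 \<le> n2" "\<forall>x\<in>{0..1}. \<forall>y\<in>{0..1}. \<bar>G (x, y) - H (x, y)\<bar> \<le> e"
  shows "\<bar>block_avg2 n1 n2 G - block_avg2 n1 n2 H\<bar> \<le> e"
proof -
  have "\<bar>\<Sum>i\<in>blockA n1. \<Sum>j\<in>blockA n2. G (c i, c j) - H (c i, c j)\<bar> \<le> (\<Sum>i\<in>blockA n1. \<Sum>j\<in>blockA n2. e)"
  proof -
    have "\<bar>\<Sum>i\<in>blockA n1. \<Sum>j\<in>blockA n2. G (c i, c j) - H (c i, c j)\<bar>
        \<le> (\<Sum>i\<in>blockA n1. \<Sum>j\<in>blockA n2. \<bar>G (c i, c j) - H (c i, c j)\<bar>)"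
      by (rule order_trans[OF sum_abs sum_mono[OF sum_abs]])
    also have "\<dots> \<le> (\<Sum>i\<in>blockA n1. \<Sum>j\<in>blockA n2. e)"
      using assms c_in_blockA by (intro sum_mono) (meson greaterThanLessThan_iff atLeastAtMost_iff less_imp_le)
    finally show ?thesis .
  qed
  then show ?thesis using assms(1,2)
    unfolding block_avg2_def by (simp add: sum_subtractf right_diff_distrib[symmetric] abs_mult field_simps)
qed

text \<open>Assumption (A1) for continuous kernels of two variables: approximate by polynomials
  (Stone--Weierstrass), which are sums of products, for which the claim is (A1) itself.\<close>
lemma block_avg2_tendsto:
  assumes G: "continuous_on UNIV G"
  shows "((\<lambda>p. block_avg2 (fst p) (snd p) G) \<longlongrightarrow> phi_integral2 G) (sequentially \<times>\<^sub>F sequentially)"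
  unfolding tendsto_iff
proof (intro allI impI)
  fix e :: real assume e: "e > 0"
  define e' where "e' = e / (3 + phi_mass * phi_mass)"
  have e': "e' > 0" unfolding e'_def using e phi_mass_nonneg by (simp add: add_pos_nonneg)
  obtain g where g: "real_polynomial_function g" "\<And>z. z \<in> {0..1} \<times> {0..1} \<Longrightarrow> \<bar>G z - g z\<bar> < e'"
    using Stone_Weierstrass_real_polynomial_function[of "{0..1::real} \<times> {0..1}" G e'] G e'
    by (auto intro: compact_Times continuous_on_subset)
  have sg: "sum_of_products g" by (rule real_polynomial_function_sum_of_products[OF g(1)])
  have cg: "continuous_on UNIV g" by (rule sum_of_products_continuous[OF sg])
  have "\<bar>phi_integral2 (\<lambda>p. G p - g p)\<bar> \<le> e' * phi_mass * phi_mass"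
    by (rule abs_phi_integral2_le) (use G cg g(2) in \<open>auto intro: continuous_intros less_imp_le\<close>)
  then have Jg: "\<bar>phi_integral2 G - phi_integral2 g\<bar> \<le> e' * phi_mass * phi_mass"
    using phi_integral2_diff[OF G cg] by simp
  have "\<forall>\<^sub>F p in sequentially \<times>\<^sub>F sequentially. dist (block_avg2 (fst p) (snd p) g) (phi_integral2 g) < e'"
    using block_avg2_tendsto_sum_of_products[OF sg] e' unfolding tendsto_iff by blast
  moreover have "\<forall>\<^sub>F p in sequentially \<times>\<^sub>F sequentially. 1 \<le> fst p \<and> 1 \<le> snd p"
    unfolding eventually_prod_sequentially by auto
  ultimately show "\<forall>\<^sub>F p in sequentially \<times>\<^sub>F sequentially. dist (block_avg2 (fst p) (snd p) G) (phi_integral2 G) < e"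
  proof eventually_elim
    case (elim p)
    have "\<bar>block_avg2 (fst p) (snd p) G - block_avg2 (fst p) (snd p) g\<bar> \<le> e'"
      by (rule abs_block_avg2_diff_le) (use elim g(2) in \<open>auto intro: less_imp_le\<close>)
    then have "\<bar>block_avg2 (fst p) (snd p) G - phi_integral2 G\<bar> < e' * (2 + phi_mass * phi_mass)"
      using elim Jg by (simp add: dist_real_def algebra_simps)
    also have "\<dots> \<le> e' * (3 + phi_mass * phi_mass)" using e' by simp
    also have "\<dots> = e" unfolding e'_def using phi_mass_nonneg by (simp add: add_nonneg_eq_0_iff)
    finally show ?case by (simp add: dist_real_def)
  qed
qed

lemma block_avg2_eventually_close:
  assumes "continuous_on UNIV G" "e > 0"
  shows "\<exists>N. \<forall>n1\<ge>N. \<forall>n2\<ge>N. \<bar>block_avg2 n1 n2 G - phi_integral2 G\<bar> < e"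
proof -
  have "\<forall>\<^sub>F p in sequentially \<times>\<^sub>F sequentially. dist (block_avg2 (fst p) (snd p) G) (phi_integral2 G) < e"
    using block_avg2_tendsto[OF assms(1)] assms(2) unfolding tendsto_iff by blast
  then show ?thesis unfolding eventually_prod_sequentially by (auto simp: dist_real_def)
qed

section \<open>The energy of \<open>f \<phi> dx\<close>\<close>

definition trunc_kernel :: "nat \<Rightarrow> real \<times> real \<Rightarrow> real" where
  "trunc_kernel k p = f_ext (fst p) * f_ext (snd p) * trunc_log k p"

definition energy_f_phi :: ennreal where
  "energy_f_phi = (\<integral>\<^sup>+x. \<integral>\<^sup>+y. ennreal (phi0 x * phi0 y * (f_ext x * f_ext y * - ln \<bar>x - y\<bar>)) \<partial>lborel \<partial>lborel)"

lemma trunc_kernel_continuous: "continuous_on UNIV (trunc_kernel k)"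
proof -
  have "continuous_on UNIV (\<lambda>p::real \<times> real. f_ext (fst p))" "continuous_on UNIV (\<lambda>p::real \<times> real. f_ext (snd p))"
    by (auto intro!: continuous_on_compose2[OF f_ext_continuous] continuous_intros)
  then show ?thesis unfolding trunc_kernel_def using trunc_log_continuous[of k]
    by (intro continuous_on_mult) auto
qed

lemma trunc_kernel_measurable [measurable]: "trunc_kernel k \<in> borel_measurable (lborel \<Otimes>\<^sub>M lborel)"
  by (rule borel_measurable_continuous_on_pair[OF trunc_kernel_continuous])

lemma trunc_kernel_nonneg: "0 \<le> trunc_kernel k p"
  unfolding trunc_kernel_def using f_ext_pos[of "fst p"] f_ext_pos[of "snd p"] trunc_log_nonneg[of k p] by simp

lemma phi0_trunc_kernel_mono:
  "k \<le> k' \<Longrightarrow> phi0 x * phi0 y * trunc_kernel k (x, y) \<le> phi0 x * phi0 y * trunc_kernel k' (x, y)"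
  unfolding trunc_kernel_def using trunc_log_mono[of k k' "(x, y)"] phi0_nonneg[of x] phi0_nonneg[of y]
    f_ext_pos[of x] f_ext_pos[of y]
  by (intro mult_left_mono) (auto intro: mult_nonneg_nonneg)

lemma nn_integral2_eq_phi_integral2:
  fixes G :: "real \<times> real \<Rightarrow> real"
  assumes G: "continuous_on UNIV G" and nonneg: "\<And>p. 0 \<le> G p"
  shows "(\<integral>\<^sup>+x. \<integral>\<^sup>+y. ennreal (phi0 x * phi0 y * G (x, y)) \<partial>lborel \<partial>lborel) = ennreal (phi_integral2 G)"
proof -
  have inner: "(\<integral>\<^sup>+y. ennreal (phi0 x * phi0 y * G (x, y)) \<partial>lborel) =
      ennreal (phi0 x * (\<integral>y. G (x, y) * phi0 y \<partial>lborel))" for x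
  proof -
    have "(\<integral>\<^sup>+y. ennreal (phi0 x * phi0 y * G (x, y)) \<partial>lborel) = (\<integral>\<^sup>+y. ennreal (phi0 x * (G (x, y) * phi0 y)) \<partial>lborel)"
      by (simp add: mult_ac)
    also have "\<dots> = ennreal (\<integral>y. phi0 x * (G (x, y) * phi0 y) \<partial>lborel)"
      by (rule nn_integral_eq_integral) (use integrable_section_phi0[OF G] phi0_nonneg nonneg in auto)
    finally show ?thesis by simp
  qed
  have "(\<integral>\<^sup>+x. ennreal (phi0 x * (\<integral>y. G (x, y) * phi0 y \<partial>lborel)) \<partial>lborel) = ennreal (phi_integral2 G)"
    unfolding phi_integral2_def using phi0_nonneg nonneg
    by (intro nn_integral_eq_integral[OF integrable_phi_integral2[OF G]] AE_I2 mult_nonneg_nonneg integral_nonneg_AE) auto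
  then show ?thesis by (simp add: inner)
qed

lemma phi_integral2_trunc_kernel_nonneg: "0 \<le> phi_integral2 (trunc_kernel k)"
  unfolding phi_integral2_def using phi0_nonneg trunc_kernel_nonneg
  by (intro integral_nonneg_AE AE_I2 mult_nonneg_nonneg) auto

lemma phi_integral2_trunc_kernel_mono: "k \<le> k' \<Longrightarrow> phi_integral2 (trunc_kernel k) \<le> phi_integral2 (trunc_kernel k')"
proof -
  assume "k \<le> k'"
  have "ennreal (phi_integral2 (trunc_kernel k)) \<le> ennreal (phi_integral2 (trunc_kernel k'))"
    unfolding nn_integral2_eq_phi_integral2[OF trunc_kernel_continuous trunc_kernel_nonneg, symmetric]
    using phi0_trunc_kernel_mono[OF \<open>k \<le> k'\<close>] by (intro nn_integral_mono ennreal_leI)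
  then show ?thesis using phi_integral2_trunc_kernel_nonneg[of k'] by (simp add: ennreal_le_iff)
qed

lemma minus_ln_weighted_eq_SUP_trunc:
  assumes "y \<noteq> x"
  shows "ennreal (phi0 x * phi0 y * (f_ext x * f_ext y * - ln \<bar>x - y\<bar>)) =
    (SUP k. ennreal (phi0 x * phi0 y * trunc_kernel k (x, y)))"
proof (cases "x \<in> {0..1} \<and> y \<in> {0..1}")
  case True
  then have xy: "0 < \<bar>x - y\<bar>" "\<bar>x - y\<bar> \<le> 1" using assms by auto
  obtain K where K: "\<forall>k\<ge>K. trunc_level k \<le> \<bar>x - y\<bar>" using trunc_level_eventually_le[OF xy(1)] by blast
  have le: "phi0 x * phi0 y * trunc_kernel k (x, y) \<le> phi0 x * phi0 y * (f_ext x * f_ext y * - ln \<bar>x - y\<bar>)" for k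
    unfolding trunc_kernel_def fst_conv snd_conv
    using trunc_log_le_minus_ln[of x y k] assms xy f_ext_pos[of x] f_ext_pos[of y] phi0_nonneg[of x] phi0_nonneg[of y]
    by (intro mult_left_mono) auto
  have "phi0 x * phi0 y * trunc_kernel K (x, y) = phi0 x * phi0 y * (f_ext x * f_ext y * - ln \<bar>x - y\<bar>)"
    unfolding trunc_kernel_def using trunc_log_eq_minus_ln[of K x y] K xy by (simp add: mult_ac)
  then have "ennreal (phi0 x * phi0 y * (f_ext x * f_ext y * - ln \<bar>x - y\<bar>)) \<le>
      (SUP k. ennreal (phi0 x * phi0 y * trunc_kernel k (x, y)))"
    by (metis SUP_upper UNIV_I)
  moreover have "(SUP k. ennreal (phi0 x * phi0 y * trunc_kernel k (x, y))) \<le>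
      ennreal (phi0 x * phi0 y * (f_ext x * f_ext y * - ln \<bar>x - y\<bar>))"
    by (intro SUP_least ennreal_leI le)
  ultimately show ?thesis by (rule antisym)
next
  case False
  then have "phi0 x * phi0 y = 0" using phi0_outside by auto
  then show ?thesis by (simp only:) simp
qed

text \<open>Monotone convergence in both variables; the diagonal is a null set of each inner integral.\<close>
lemma energy_f_phi_eq_SUP: "energy_f_phi = (SUP k. ennreal (phi_integral2 (trunc_kernel k)))"
proof -
  define g where "g k x y = ennreal (phi0 x * phi0 y * trunc_kernel k (x, y))" for k x y
  have g_mono: "g k x y \<le> g k' x y" if "k \<le> k'" for k k' x y
    unfolding g_def using phi0_trunc_kernel_mono[OF that] by (rule ennreal_leI)
  have g_meas: "case_prod (g k) \<in> borel_measurable (lborel \<Otimes>\<^sub>M lborel)" for k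
  proof -
    have "(\<lambda>p. ennreal (phi0 (fst p) * phi0 (snd p) * trunc_kernel k p)) \<in> borel_measurable (lborel \<Otimes>\<^sub>M lborel)"
      by measurable
    then show ?thesis unfolding g_def by (simp add: case_prod_beta')
  qed
  have "energy_f_phi = (\<integral>\<^sup>+x. \<integral>\<^sup>+y. (SUP k. g k x y) \<partial>lborel \<partial>lborel)"
    unfolding energy_f_phi_def g_def
  proof (rule nn_integral_cong, rule nn_integral_cong_AE)
    fix x
    show "AE y in lborel. ennreal (phi0 x * phi0 y * (f_ext x * f_ext y * - ln \<bar>x - y\<bar>)) =
        (SUP k. ennreal (phi0 x * phi0 y * trunc_kernel k (x, y)))"
      using AE_lborel_singleton[of x] by eventually_elim (rule minus_ln_weighted_eq_SUP_trunc)
  qed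
  also have "\<dots> = (\<integral>\<^sup>+x. (SUP k. \<integral>\<^sup>+y. g k x y \<partial>lborel) \<partial>lborel)"
  proof (rule nn_integral_cong, rule nn_integral_monotone_convergence_SUP)
    fix x
    show "incseq (\<lambda>k y. g k x y)" using g_mono by (auto simp: incseq_def le_fun_def)
    show "(\<lambda>y. g k x y) \<in> borel_measurable lborel" for k
      using measurable_Pair2[OF g_meas[of k], of x] by simp
  qed
  also have "\<dots> = (SUP k. \<integral>\<^sup>+x. \<integral>\<^sup>+y. g k x y \<partial>lborel \<partial>lborel)"
  proof (rule nn_integral_monotone_convergence_SUP)
    show "incseq (\<lambda>k x. \<integral>\<^sup>+y. g k x y \<partial>lborel)"
      using g_mono by (auto simp: incseq_def le_fun_def intro!: nn_integral_mono)
    show "(\<lambda>x. \<integral>\<^sup>+y. g k x y \<partial>lborel) \<in> borel_measurable lborel" for k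
      using g_meas by (rule lborel.borel_measurable_nn_integral)
  qed
  also have "\<dots> = (SUP k. ennreal (phi_integral2 (trunc_kernel k)))"
    unfolding g_def using nn_integral2_eq_phi_integral2[OF trunc_kernel_continuous trunc_kernel_nonneg] by simp
  finally show ?thesis .
qed

definition near_diag_log :: "nat \<Rightarrow> nat \<Rightarrow> real \<Rightarrow> real" where
  "near_diag_log n1 n2 \<delta> = (1 / real (card (blockA n1 \<times> blockA n2))) *
     (\<Sum>i\<in>blockA n1. \<Sum>j\<in>{j\<in>blockA n2. i \<noteq> j \<and> \<bar>c i - c j\<bar> < \<delta>}. - ln \<bar>c i - c j\<bar>)"

definition near_diag_negligible :: "nat \<Rightarrow> real \<Rightarrow> bool" where
  "near_diag_negligible k \<epsilon> \<longleftrightarrow>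
     (\<forall>\<^sub>F n in sequentially. \<forall>a\<le>q n. \<forall>b\<le>q n. near_diag_log (2^a*n) (2^b*n) (trunc_level k) < \<epsilon>)"

lemma near_diag_log_mono:
  assumes "1 \<le> n1" "1 \<le> n2" "\<delta>' \<le> \<delta>"
  shows "near_diag_log n1 n2 \<delta>' \<le> near_diag_log n1 n2 \<delta>"
  unfolding near_diag_log_def
proof (intro mult_left_mono sum_mono sum_mono2)
  fix i j assume i: "i \<in> blockA n1"
    and "j \<in> {j\<in>blockA n2. i \<noteq> j \<and> \<bar>c i - c j\<bar> < \<delta>} - {j\<in>blockA n2. i \<noteq> j \<and> \<bar>c i - c j\<bar> < \<delta>'}"
  then have "j \<in> blockA n2" by auto
  then show "0 \<le> - ln \<bar>c i - c j\<bar>" using dist_c_le_1[OF i _ assms(1,2)] by (intro minus_ln_nonneg) auto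
qed (use assms(3) in auto)

lemma near_diag_negligible_eventually: "\<epsilon> > 0 \<Longrightarrow> \<exists>K. \<forall>k\<ge>K. near_diag_negligible k \<epsilon>"
proof -
  assume "\<epsilon> > 0"
  then obtain \<delta> where \<delta>: "\<delta> > 0"
    "\<forall>\<^sub>F n in sequentially. \<forall>a\<le>q n. \<forall>b\<le>q n. near_diag_log (2^a*n) (2^b*n) \<delta> < \<epsilon>"
    using A2 unfolding near_diag_log_def by blast
  obtain K where K: "\<forall>k\<ge>K. trunc_level k \<le> \<delta>" using trunc_level_eventually_le[OF \<delta>(1)] by blast
  have "near_diag_negligible k \<epsilon>" if "k \<ge> K" for k
    unfolding near_diag_negligible_def using \<delta>(2) eventually_ge_at_top[of 1]
  proof eventually_elim
    case (elim n)
    show ?case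
    proof (intro allI impI)
      fix a b assume ab: "a \<le> q n" "b \<le> q n"
      have "near_diag_log (2^a*n) (2^b*n) (trunc_level k) \<le> near_diag_log (2^a*n) (2^b*n) \<delta>"
        by (rule near_diag_log_mono) (use elim K that in auto)
      then show "near_diag_log (2^a*n) (2^b*n) (trunc_level k) < \<epsilon>" using elim ab by fastforce
    qed
  qed
  then show ?thesis by blast
qed

lemma A3_centres_distinct:
  "\<forall>\<^sub>F n in sequentially. \<forall>i\<in>blockAq n (q n). \<forall>j\<in>blockAq n (q n). i \<noteq> j \<longrightarrow> c i \<noteq> c j"
  using A3[rule_format, OF zero_less_one]
proof eventually_elim
  case (elim n)
  show ?case
  proof (intro ballI impI)
    fix i j assume ij: "i \<in> blockAq n (q n)" "j \<in> blockAq n (q n)" "i \<noteq> j"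
    then have "l i + l j < 2 * \<bar>c i - c j\<bar>" using elim by auto
    moreover have "i \<ge> 1" "j \<ge> 1" using ij by (auto simp: blockAq_def blockA_def)
    then have "l i > 0" "l j > 0" using l_pos by auto
    ultimately show "c i \<noteq> c j" by auto
  qed
qed

lemma trunc_kernel_increment_le:
  assumes "k0 \<le> k" "x \<noteq> y" "\<bar>x - y\<bar> \<le> 1"
  shows "trunc_kernel k (x, y) - trunc_kernel k0 (x, y) \<le>
    f_max * f_max * (if \<bar>x - y\<bar> < trunc_level k0 then - ln \<bar>x - y\<bar> else 0)"
proof -
  define R where "R = (if \<bar>x - y\<bar> < trunc_level k0 then - ln \<bar>x - y\<bar> else 0)"
  have R: "0 \<le> R" unfolding R_def using assms(3) minus_ln_nonneg[of "\<bar>x - y\<bar>"] by auto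
  have "trunc_kernel k (x, y) - trunc_kernel k0 (x, y) = f_ext x * f_ext y * (trunc_log k (x, y) - trunc_log k0 (x, y))"
    unfolding trunc_kernel_def by (simp add: algebra_simps)
  also have "\<dots> \<le> f_ext x * f_ext y * R"
    unfolding R_def using trunc_log_increment_le[OF assms(2,3,1)] f_ext_pos[of x] f_ext_pos[of y]
    by (intro mult_left_mono) auto
  also have "\<dots> \<le> f_max * f_max * R"
    using R f_ext_le_f_max[of x] f_ext_le_f_max[of y] f_ext_pos[of x] f_ext_pos[of y]
    by (intro mult_right_mono mult_mono) auto
  finally show ?thesis unfolding R_def .
qed

lemma block_avg2_trunc_increment_le:
  assumes "k0 \<le> k" "1 \<le> n" and distinct: "\<forall>i\<in>blockA n. \<forall>j\<in>blockA (2*n). c i \<noteq> c j"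
  shows "block_avg2 n (2*n) (\<lambda>p. trunc_kernel k p - trunc_kernel k0 p) \<le>
    f_max * f_max * near_diag_log n (2*n) (trunc_level k0)"
proof -
  have "(\<Sum>i\<in>blockA n. \<Sum>j\<in>blockA (2*n). trunc_kernel k (c i, c j) - trunc_kernel k0 (c i, c j)) \<le>
      (\<Sum>i\<in>blockA n. \<Sum>j\<in>blockA (2*n). f_max * f_max *
        (if i \<noteq> j \<and> \<bar>c i - c j\<bar> < trunc_level k0 then - ln \<bar>c i - c j\<bar> else 0))"
  proof (intro sum_mono)
    fix i j assume i: "i \<in> blockA n" and j: "j \<in> blockA (2*n)"
    have "i \<noteq> j" using blockA_pow2_disjoint[of 0 1 n] i j by auto
    then show "trunc_kernel k (c i, c j) - trunc_kernel k0 (c i, c j) \<le> f_max * f_max *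
        (if i \<noteq> j \<and> \<bar>c i - c j\<bar> < trunc_level k0 then - ln \<bar>c i - c j\<bar> else 0)"
      using trunc_kernel_increment_le[OF assms(1)] distinct dist_c_le_1[OF i j] assms(2) i j by simp
  qed
  also have "\<dots> = f_max * f_max * (\<Sum>i\<in>blockA n. \<Sum>j\<in>{j\<in>blockA (2*n). i \<noteq> j \<and> \<bar>c i - c j\<bar> < trunc_level k0}.
      - ln \<bar>c i - c j\<bar>)"
    by (simp only: sum_distrib_left sum.inter_filter[OF finite_blockA])
  finally have sums: "(\<Sum>i\<in>blockA n. \<Sum>j\<in>blockA (2*n). trunc_kernel k (c i, c j) - trunc_kernel k0 (c i, c j)) \<le>
      f_max * f_max * (\<Sum>i\<in>blockA n. \<Sum>j\<in>{j\<in>blockA (2*n). i \<noteq> j \<and> \<bar>c i - c j\<bar> < trunc_level k0}.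
        - ln \<bar>c i - c j\<bar>)" .
  show ?thesis
    unfolding block_avg2_def near_diag_log_def card_cartesian_product
    using mult_left_mono[OF sums, of "1 / (real (card (blockA n)) * real (card (blockA (2 * n))))"]
    by (simp add: mult_ac)
qed

lemma phi_integral2_trunc_increment_le:
  assumes "near_diag_negligible k0 \<epsilon>" "k0 \<le> k"
  shows "phi_integral2 (trunc_kernel k) - phi_integral2 (trunc_kernel k0) \<le> f_max * f_max * \<epsilon>"
proof -
  let ?G = "\<lambda>p. trunc_kernel k p - trunc_kernel k0 p"
  have G: "continuous_on UNIV ?G" using trunc_kernel_continuous by (intro continuous_intros)
  have "phi_integral2 ?G \<le> f_max * f_max * \<epsilon> + e" if e: "e > 0" for e
  proof -
    obtain N where N: "\<forall>n1\<ge>N. \<forall>n2\<ge>N. \<bar>block_avg2 n1 n2 ?G - phi_integral2 ?G\<bar> < e"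
      using block_avg2_eventually_close[OF G e] by blast
    have "\<forall>\<^sub>F n in sequentially. (\<forall>a\<le>q n. \<forall>b\<le>q n. near_diag_log (2^a*n) (2^b*n) (trunc_level k0) < \<epsilon>) \<and>
        (\<forall>i\<in>blockAq n (q n). \<forall>j\<in>blockAq n (q n). i \<noteq> j \<longrightarrow> c i \<noteq> c j) \<and> 1 \<le> q n \<and> max N 1 \<le> n"
    proof (intro eventually_conj)
      show "\<forall>\<^sub>F n in sequentially. \<forall>a\<le>q n. \<forall>b\<le>q n. near_diag_log (2^a*n) (2^b*n) (trunc_level k0) < \<epsilon>"
        using assms(1) unfolding near_diag_negligible_def .
      show "\<forall>\<^sub>F n in sequentially. 1 \<le> q n" using q_lim unfolding filterlim_at_top by blast
      show "\<forall>\<^sub>F n in sequentially. max N 1 \<le> n" by (rule eventually_ge_at_top)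
    qed (rule A3_centres_distinct)
    then obtain n where n: "\<forall>a\<le>q n. \<forall>b\<le>q n. near_diag_log (2^a*n) (2^b*n) (trunc_level k0) < \<epsilon>"
      "\<forall>i\<in>blockAq n (q n). \<forall>j\<in>blockAq n (q n). i \<noteq> j \<longrightarrow> c i \<noteq> c j" "1 \<le> q n" "max N 1 \<le> n"
      using eventually_happens'[OF sequentially_bot] by blast
    have "\<forall>i\<in>blockA n. \<forall>j\<in>blockA (2*n). c i \<noteq> c j"
      using n(2,3) blockA_subset_blockAq[of 0 "q n" n] blockA_subset_blockAq[of 1 "q n" n]
        blockA_pow2_disjoint[of 0 1 n] by (simp add: subset_iff disjoint_iff) metis
    then have "block_avg2 n (2*n) ?G \<le> f_max * f_max * near_diag_log n (2*n) (trunc_level k0)"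
      using n(4) by (intro block_avg2_trunc_increment_le[OF assms(2)]) auto
    also have "\<dots> \<le> f_max * f_max * \<epsilon>"
      using n(1)[rule_format, of 0 1] n(3) f_max_pos by (intro mult_left_mono) auto
    finally have "block_avg2 n (2*n) ?G \<le> f_max * f_max * \<epsilon>" .
    moreover have "\<bar>block_avg2 n (2*n) ?G - phi_integral2 ?G\<bar> < e" using N n(4) by simp
    ultimately show ?thesis by linarith
  qed
  then have "phi_integral2 ?G \<le> f_max * f_max * \<epsilon>" by (rule field_le_epsilon)
  then show ?thesis using phi_integral2_diff[OF trunc_kernel_continuous trunc_kernel_continuous] by simp
qed

lemma energy_f_phi_le_trunc:
  assumes "near_diag_negligible k0 \<epsilon>" "\<epsilon> > 0"
  shows "energy_f_phi \<le> ennreal (phi_integral2 (trunc_kernel k0) + f_max * f_max * \<epsilon>)"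
  unfolding energy_f_phi_eq_SUP
proof (intro SUP_least ennreal_leI)
  fix k
  show "phi_integral2 (trunc_kernel k) \<le> phi_integral2 (trunc_kernel k0) + f_max * f_max * \<epsilon>"
  proof (cases "k0 \<le> k")
    case True
    then show ?thesis using phi_integral2_trunc_increment_le[OF assms(1) True] by linarith
  next
    case False
    moreover have "0 < f_max * f_max * \<epsilon>" using f_max_pos assms(2) by simp
    ultimately show ?thesis using phi_integral2_trunc_kernel_mono[of k k0] by simp
  qed
qed

lemma energy_f_phi_finite: "energy_f_phi < \<infinity>"
proof -
  obtain K where "\<forall>k\<ge>K. near_diag_negligible k 1" using near_diag_negligible_eventually[of 1] by auto
  then show ?thesis using energy_f_phi_le_trunc[of K 1] by (simp add: le_less_trans)
qed

definition energy_f_phi_real :: real where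
  "energy_f_phi_real = enn2real energy_f_phi"

lemma energy_f_phi_eq_ennreal: "energy_f_phi = ennreal energy_f_phi_real"
  unfolding energy_f_phi_real_def using energy_f_phi_finite by simp

lemma energy_f_phi_real_nonneg: "0 \<le> energy_f_phi_real"
  unfolding energy_f_phi_real_def by simp

lemma phi_integral2_trunc_le_energy: "phi_integral2 (trunc_kernel k) \<le> energy_f_phi_real"
proof -
  have "ennreal (phi_integral2 (trunc_kernel k)) \<le> energy_f_phi"
    unfolding energy_f_phi_eq_SUP by (rule SUP_upper) simp
  then show ?thesis using energy_f_phi_eq_ennreal energy_f_phi_real_nonneg by (simp add: ennreal_le_iff)
qed

lemma energy_f_phi_real_approx:
  assumes "\<epsilon> > 0"
  shows "\<exists>k. near_diag_negligible k \<epsilon> \<and> energy_f_phi_real \<le> phi_integral2 (trunc_kernel k) + f_max * f_max * \<epsilon>"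
proof -
  obtain K where K: "near_diag_negligible K \<epsilon>" using near_diag_negligible_eventually[OF assms] by blast
  have "ennreal energy_f_phi_real \<le> ennreal (phi_integral2 (trunc_kernel K) + f_max * f_max * \<epsilon>)"
    using energy_f_phi_le_trunc[OF K assms] energy_f_phi_eq_ennreal by simp
  moreover have "0 \<le> phi_integral2 (trunc_kernel K) + f_max * f_max * \<epsilon>"
    using phi_integral2_trunc_kernel_nonneg[of K] f_max_pos assms by simp
  ultimately show ?thesis using K by (auto simp: ennreal_le_iff)
qed

section \<open>Masses of the interval measures\<close>

lemma l_gt_0: "1 \<le> i \<Longrightarrow> 0 < l i"
  using l_pos by auto

lemma l_antimono: "1 \<le> n \<Longrightarrow> n \<le> i \<Longrightarrow> l i \<le> l n"
proof -
  assume n: "1 \<le> n" and "n \<le> i"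
  from \<open>n \<le> i\<close> show ?thesis
  proof (induction i rule: dec_induct)
    case (step m)
    then have "l (Suc m) \<le> l m" using l_decr n by auto
    then show ?case using step by linarith
  qed simp
qed

lemma integral_edge_cutoff_small: "\<epsilon> > 0 \<Longrightarrow> \<exists>\<eta>>0. (\<integral>x. edge_cutoff \<eta> x * phi0 x \<partial>lborel) < \<epsilon>"
proof -
  assume e: "\<epsilon> > 0"
  have "(\<lambda>k. \<integral>x. edge_cutoff (trunc_level k) x * phi0 x \<partial>lborel) \<longlonglongrightarrow> (\<integral>x. 0 \<partial>(lborel::real measure))"
  proof (rule integral_dominated_convergence[where w="\<lambda>x. 2 * phi0 x" and f="\<lambda>x. 0"
        and s="\<lambda>k x. edge_cutoff (trunc_level k) x * phi0 x"])
    fix k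
    show "(\<lambda>x. edge_cutoff (trunc_level k) x * phi0 x) \<in> borel_measurable lborel"
      by (rule borel_measurable_mult_phi0[OF edge_cutoff_continuous[OF trunc_level_pos]])
    show "AE x in lborel. norm (edge_cutoff (trunc_level k) x * phi0 x) \<le> 2 * phi0 x"
      using edge_cutoff_nonneg edge_cutoff_le_2 phi0_nonneg by (intro AE_I2) (simp add: abs_mult mult_right_mono)
  next
    show "AE x in lborel. (\<lambda>k. edge_cutoff (trunc_level k) x * phi0 x) \<longlonglongrightarrow> 0"
      using AE_lborel_singleton[of 0] AE_lborel_singleton[of 1]
    proof eventually_elim
      case (elim x)
      show ?case
      proof (cases "x \<in> {0..1}")
        case True
        then have "0 < min x (1 - x) / 2" using elim by auto
        then obtain K where "\<forall>k\<ge>K. trunc_level k \<le> min x (1 - x) / 2"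
          using trunc_level_eventually_le by blast
        then have "\<forall>k\<ge>K. edge_cutoff (trunc_level k) x * phi0 x = 0"
          by (auto intro!: edge_cutoff_eq_0 trunc_level_pos)
        then show ?thesis by (intro tendsto_eventually) (auto simp: eventually_sequentially)
      qed (simp add: phi0_outside)
    qed
  qed (use integrable_phi0 in simp_all)
  then have "\<forall>\<^sub>F k in sequentially. (\<integral>x. edge_cutoff (trunc_level k) x * phi0 x \<partial>lborel) < \<epsilon>"
    using e by (simp add: order_tendstoD(2))
  then obtain k where "(\<integral>x. edge_cutoff (trunc_level k) x * phi0 x \<partial>lborel) < \<epsilon>"
    using eventually_happens'[OF sequentially_bot] by blast
  then show ?thesis using trunc_level_pos[of k] by blast
qed

definition bump :: "nat \<Rightarrow> real \<Rightarrow> real" where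
  "bump i x = f x / l i * indicator (interv c l i \<inter> {0..1}) x"

definition mass :: "nat \<Rightarrow> real" where
  "mass i = (\<integral>x. bump i x \<partial>lborel)"

lemma interv_measurable [measurable]: "interv c l i \<in> sets borel"
  unfolding interv_def by simp

lemma bump_measurable [measurable]: "bump i \<in> borel_measurable borel"
proof -
  have "continuous_on (interv c l i \<inter> {0..1}) (\<lambda>x. f x * (1 / l i))"
    by (intro continuous_on_mult_right continuous_on_subset[OF f_cont]) auto
  then have "(\<lambda>x. indicator (interv c l i \<inter> {0..1}) x *\<^sub>R (f x * (1 / l i))) \<in> borel_measurable borel"
    by (intro borel_measurable_continuous_on_indicator) auto
  then show ?thesis unfolding bump_def by (simp add: mult.commute)
qed

lemma bump_nonneg: "1 \<le> i \<Longrightarrow> 0 \<le> bump i x"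
  using f_pos l_pos unfolding bump_def by (auto simp: indicator_def intro!: divide_nonneg_pos less_imp_le)

lemma bump_nonzero_imp: "bump i x \<noteq> 0 \<Longrightarrow> x \<in> interv c l i \<and> x \<in> {0..1}"
  unfolding bump_def by (auto simp: indicator_def split: if_splits)

lemma bump_le: "1 \<le> i \<Longrightarrow> bump i x \<le> f_max / l i * indicator (interv c l i) x"
proof (cases "x \<in> interv c l i \<inter> {0..1}")
  case True
  assume "1 \<le> i"
  then have "0 < l i" using l_pos by auto
  moreover have "f x \<le> f_max" using True f_ext_le_f_max[of x] f_ext_eq[of x] by auto
  ultimately show ?thesis using True unfolding bump_def by (simp add: divide_right_mono)
next
  case False
  assume "1 \<le> i"
  then have "0 \<le> f_max / l i * indicator (interv c l i) x" using f_max_pos l_gt_0[of i] by simp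
  then show ?thesis using False unfolding bump_def by simp
qed

lemma measure_interv: "1 \<le> i \<Longrightarrow> measure lborel (interv c l i) = l i"
  using l_pos unfolding interv_def by auto

lemma integrable_indicator_interv: "1 \<le> i \<Longrightarrow> integrable lborel (indicator (interv c l i) :: real \<Rightarrow> real)"
  using l_pos unfolding interv_def by (intro integrable_real_indicator) auto

lemma integral_indicator_interv:
  "1 \<le> i \<Longrightarrow> (\<integral>x. a / l i * indicator (interv c l i) x \<partial>lborel) = a"
  using measure_interv[of i] l_gt_0[of i] by simp

lemma integrable_bump: "1 \<le> i \<Longrightarrow> integrable lborel (bump i)"
proof (rule Bochner_Integration.integrable_bound[where f="\<lambda>x. f_max / l i * indicator (interv c l i) x"])
  assume i: "1 \<le> i"
  then show "integrable lborel (\<lambda>x. f_max / l i * indicator (interv c l i) x)"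
    using integrable_indicator_interv by simp
  have "norm (bump i x) \<le> norm (f_max / l i * indicator (interv c l i) x)" for x
    using bump_nonneg[OF i, of x] bump_le[OF i, of x] l_gt_0[OF i] f_max_pos by simp
  then show "AE x in lborel. norm (bump i x) \<le> norm (f_max / l i * indicator (interv c l i) x)" by simp
qed simp

lemma mass_nonneg: "1 \<le> i \<Longrightarrow> 0 \<le> mass i"
  unfolding mass_def using bump_nonneg by (auto intro: integral_nonneg_AE)

lemma mass_le_f_max: "1 \<le> i \<Longrightarrow> mass i \<le> f_max"
proof -
  assume i: "1 \<le> i"
  have "mass i \<le> (\<integral>x. f_max / l i * indicator (interv c l i) x \<partial>lborel)"
    unfolding mass_def using integrable_bump[OF i] integrable_indicator_interv[OF i] bump_le[OF i]
    by (intro Bochner_Integration.integral_mono) auto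
  then show ?thesis using integral_indicator_interv[OF i] by simp
qed

lemma abs_mass_sub_le:
  assumes i: "1 \<le> i" and sub: "interv c l i \<subseteq> {0..1}"
    and close: "\<forall>x\<in>interv c l i. \<bar>f x - f (c i)\<bar> \<le> e"
  shows "\<bar>mass i - f (c i)\<bar> \<le> e"
proof -
  have li: "0 < l i" using l_pos i by auto
  have eq: "(\<lambda>x. bump i x - f (c i) / l i * indicator (interv c l i) x) =
      (\<lambda>x. (f x - f (c i)) / l i * indicator (interv c l i) x)"
    using sub unfolding bump_def by (auto simp: fun_eq_iff indicator_def diff_divide_distrib)
  have int: "integrable lborel (\<lambda>x. (f x - f (c i)) / l i * indicator (interv c l i) x)"
    unfolding eq[symmetric] using integrable_bump[OF i] integrable_indicator_interv[OF i] by simp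
  have "mass i - f (c i) = (\<integral>x. bump i x - f (c i) / l i * indicator (interv c l i) x \<partial>lborel)"
    unfolding mass_def using integrable_bump[OF i] integrable_indicator_interv[OF i] integral_indicator_interv[OF i]
    by simp
  also have "\<dots> = (\<integral>x. (f x - f (c i)) / l i * indicator (interv c l i) x \<partial>lborel)"
    by (simp only: eq)
  finally have "\<bar>mass i - f (c i)\<bar> = norm (\<integral>x. (f x - f (c i)) / l i * indicator (interv c l i) x \<partial>lborel)"
    by simp
  also have "\<dots> \<le> (\<integral>x. e / l i * indicator (interv c l i) x \<partial>lborel)"
  proof (rule Bochner_Integration.integral_norm_bound_integral[OF int])
    show "integrable lborel (\<lambda>x. e / l i * indicator (interv c l i) x)"
      using integrable_indicator_interv[OF i] by simp
    show "norm ((f x - f (c i)) / l i * indicator (interv c l i) x) \<le> e / l i * indicator (interv c l i) x" for x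
      using close li by (cases "x \<in> interv c l i") (auto simp: abs_mult divide_right_mono)
  qed
  also have "\<dots> = e" by (rule integral_indicator_interv[OF i])
  finally show ?thesis .
qed

text \<open>Away from the end points of \<open>[0,1]\<close> a short interval carries mass close to \<open>f (c i)\<close>; near them
  mass may be lost, which is charged to the edge cutoff.\<close>
lemma abs_mass_sub_f_ext_le:
  assumes i: "1 \<le> i" "c i \<in> {0<..<1}" and \<eta>: "0 < \<eta>" and li: "l i < min \<eta> d" and e: "0 \<le> e"
    and unif: "\<forall>x\<in>{0..1}. \<forall>y\<in>{0..1}. dist y x < d \<longrightarrow> dist (f y) (f x) < e"
  shows "\<bar>mass i - f_ext (c i)\<bar> \<le> e + 2 * f_max * edge_cutoff \<eta> (c i)"
proof (cases "c i < \<eta> \<or> 1 - \<eta> < c i")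
  case True
  then have "1 \<le> edge_cutoff \<eta> (c i)" by (intro edge_cutoff_ge_1 \<eta>)
  then have "f_max * 1 \<le> f_max * edge_cutoff \<eta> (c i)" using f_max_pos by (intro mult_left_mono) auto
  moreover have "\<bar>mass i - f_ext (c i)\<bar> \<le> f_max"
    using mass_nonneg[OF i(1)] mass_le_f_max[OF i(1)] f_ext_le_f_max[of "c i"] f_ext_pos[of "c i"]
    by (simp add: abs_le_iff)
  ultimately show ?thesis using e f_max_pos by linarith
next
  case False
  have l: "0 < l i" using l_gt_0[OF i(1)] .
  have sub: "interv c l i \<subseteq> {0..1}" using False l li unfolding interv_def by auto
  have "\<forall>x\<in>interv c l i. \<bar>f x - f (c i)\<bar> \<le> e"
  proof
    fix x assume x: "x \<in> interv c l i"
    then have "dist x (c i) < d" using l li unfolding interv_def dist_real_def by auto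
    then show "\<bar>f x - f (c i)\<bar> \<le> e" using unif sub x i(2) by (force simp: dist_real_def)
  qed
  then have "\<bar>mass i - f_ext (c i)\<bar> \<le> e" using abs_mass_sub_le[OF i(1) sub] f_ext_eq[of "c i"] i(2) by simp
  then show ?thesis using edge_cutoff_nonneg[of \<eta> "c i"] f_max_pos by (simp add: add_increasing2)
qed

definition mass_deviation :: "nat \<Rightarrow> real" where
  "mass_deviation n = (1 / real (card (blockA n))) * (\<Sum>i\<in>blockA n. \<bar>mass i - f_ext (c i)\<bar>)"

lemma mass_deviation_nonneg: "0 \<le> mass_deviation n"
  unfolding mass_deviation_def by (simp add: sum_nonneg)

lemma mass_deviation_le:
  assumes "1 \<le> n" "0 < \<eta>" "l n < min \<eta> d" "0 \<le> e"
    and "\<forall>x\<in>{0..1}. \<forall>y\<in>{0..1}. dist y x < d \<longrightarrow> dist (f y) (f x) < e"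
  shows "mass_deviation n \<le> e + 2 * f_max * block_avg n (edge_cutoff \<eta>)"
proof -
  have "\<bar>mass i - f_ext (c i)\<bar> \<le> e + 2 * f_max * edge_cutoff \<eta> (c i)" if i: "i \<in> blockA n" for i
    using abs_mass_sub_f_ext_le[OF blockA_ge_1[OF i assms(1)] c_in_blockA[OF i assms(1)] assms(2) _ assms(4,5)]
      l_antimono[OF assms(1), of i] i assms(3) by (auto simp: blockA_def)
  then have "mass_deviation n \<le> (1 / real (card (blockA n))) * (\<Sum>i\<in>blockA n. e + 2 * f_max * edge_cutoff \<eta> (c i))"
    unfolding mass_deviation_def by (intro mult_left_mono sum_mono) auto
  also have "\<dots> = e + 2 * f_max * block_avg n (edge_cutoff \<eta>)"
    unfolding block_avg_def using assms(1) by (simp add: sum.distrib sum_distrib_left[symmetric] field_simps)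
  finally show ?thesis .
qed

lemma mass_deviation_tendsto_0: "mass_deviation \<longlonglongrightarrow> 0"
proof (rule LIMSEQ_I)
  fix \<epsilon> :: real assume "\<epsilon> > 0"
  define e where "e = \<epsilon> / (2 + 4 * f_max)"
  have e: "0 < e" unfolding e_def using \<open>\<epsilon> > 0\<close> f_max_pos by simp
  obtain \<eta> where \<eta>: "\<eta> > 0" "(\<integral>x. edge_cutoff \<eta> x * phi0 x \<partial>lborel) < e"
    using integral_edge_cutoff_small[OF e] by blast
  have "uniformly_continuous_on {0..1} f" using f_cont by (intro compact_uniformly_continuous) auto
  then obtain d where d: "d > 0" "\<forall>x\<in>{0..1}. \<forall>y\<in>{0..1}. dist y x < d \<longrightarrow> dist (f y) (f x) < e"
    using e unfolding uniformly_continuous_on_def by metis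
  have "\<forall>\<^sub>F n in sequentially. block_avg n (edge_cutoff \<eta>) < (\<integral>x. edge_cutoff \<eta> x * phi0 x \<partial>lborel) + e"
    using block_avg_tendsto[OF edge_cutoff_continuous[OF \<eta>(1)]] e
    unfolding tendsto_iff dist_real_def by (auto elim!: allE[of _ e] eventually_mono)
  moreover have "\<forall>\<^sub>F n in sequentially. \<bar>l n\<bar> < min \<eta> d"
  proof -
    have "0 < min \<eta> d" using \<eta>(1) d(1) by simp
    from l_lim[unfolded tendsto_iff dist_real_def, rule_format, OF this] show ?thesis by simp
  qed
  ultimately have "\<forall>\<^sub>F n in sequentially. norm (mass_deviation n - 0) < \<epsilon>"
    using eventually_ge_at_top[of 1]
  proof eventually_elim
    case (elim n)
    have "mass_deviation n \<le> e + 2 * f_max * block_avg n (edge_cutoff \<eta>)"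
      using elim e d by (intro mass_deviation_le \<eta>(1)) auto
    also have "\<dots> < e + 2 * f_max * (e + e)" using elim \<eta>(2) f_max_pos by simp
    also have "\<dots> = e * (1 + 4 * f_max)" by (simp add: algebra_simps)
    also have "\<dots> \<le> e * (2 + 4 * f_max)" using e by simp
    also have "\<dots> = \<epsilon>" unfolding e_def using f_max_pos by simp
    finally show ?case using mass_deviation_nonneg[of n] by simp
  qed
  then show "\<exists>N. \<forall>n\<ge>N. norm (mass_deviation n - 0) < \<epsilon>" unfolding eventually_sequentially .
qed

definition mean_mass :: "nat \<Rightarrow> real" where
  "mean_mass n = (1 / real (card (blockA n))) * (\<Sum>i\<in>blockA n. mass i)"

definition f_phi_integral :: real where
  "f_phi_integral = (\<integral>x. f_ext x * phi0 x \<partial>lborel)"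

lemma block_avg_f_ext_tendsto: "(\<lambda>n. block_avg n f_ext) \<longlonglongrightarrow> f_phi_integral"
  unfolding f_phi_integral_def using f_ext_continuous
  by (intro block_avg_tendsto) (auto intro: continuous_on_subset)

lemma f_phi_integral_pos: "0 < f_phi_integral"
proof -
  have "f_min \<le> f_phi_integral"
  proof (rule tendsto_lowerbound[OF block_avg_f_ext_tendsto])
    show "\<forall>\<^sub>F n in sequentially. f_min \<le> block_avg n f_ext"
      using eventually_ge_at_top[of 1]
    proof eventually_elim
      case (elim n)
      have "(\<Sum>i\<in>blockA n. f_min) \<le> (\<Sum>i\<in>blockA n. f_ext (c i))" by (intro sum_mono f_ext_ge_f_min)
      then show ?case unfolding block_avg_def using elim by (simp add: field_simps)
    qed
  qed simp
  then show ?thesis using f_min_pos by linarith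
qed

lemma set_integral_f_phi_eq: "(LINT x:{0..1}|lborel. f x * \<phi> x) = f_phi_integral"
proof -
  have "(LINT x:{0..1}|lborel. f x * \<phi> x) = (\<integral>x. f x * phi0 x \<partial>lborel)"
    by (rule set_integral_phi_eq[OF f_cont])
  also have "\<dots> = f_phi_integral" unfolding f_phi_integral_def
  proof (rule Bochner_Integration.integral_cong[OF refl])
    fix x show "f x * phi0 x = f_ext x * phi0 x"
      by (cases "x \<in> {0..1}") (auto simp: f_ext_eq phi0_outside)
  qed
  finally show ?thesis .
qed

lemma mean_mass_tendsto: "mean_mass \<longlonglongrightarrow> f_phi_integral"
proof -
  have "\<bar>mean_mass n - block_avg n f_ext\<bar> \<le> mass_deviation n" for n
  proof -
    have "mean_mass n - block_avg n f_ext = (1 / real (card (blockA n))) * (\<Sum>i\<in>blockA n. mass i - f_ext (c i))"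
      unfolding mean_mass_def block_avg_def by (simp add: sum_subtractf right_diff_distrib)
    then show ?thesis unfolding mass_deviation_def by (simp add: abs_mult divide_right_mono sum_abs)
  qed
  then have "(\<lambda>n. mean_mass n - block_avg n f_ext) \<longlonglongrightarrow> 0"
    by (intro Lim_null_comparison[OF _ mass_deviation_tendsto_0]) auto
  from tendsto_add[OF this block_avg_f_ext_tendsto] show ?thesis by simp
qed

section \<open>Energies of the normalised measures\<close>

definition total_mass :: "nat \<Rightarrow> real" where
  "total_mass n = (\<Sum>i\<in>blockA n. mass i)"

definition muhat_density :: "nat \<Rightarrow> real \<Rightarrow> real" where
  "muhat_density n x = (\<Sum>k\<in>blockA n. bump k x) / total_mass n"

definition centre_log :: "nat \<Rightarrow> nat \<Rightarrow> real" where
  "centre_log i j = - ln \<bar>c i - c j\<bar>"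

definition discrete_energy :: "nat \<Rightarrow> nat \<Rightarrow> real" where
  "discrete_energy n1 n2 =
     (\<Sum>i\<in>blockA n1. \<Sum>j\<in>blockA n2. mass i * mass j * centre_log i j) / (total_mass n1 * total_mass n2)"

lemma mean_mass_eq: "mean_mass n = total_mass n / real n"
  unfolding mean_mass_def total_mass_def by simp

lemma densA_eq: "densA c l f n x = (1 / real (card (blockA n))) * (\<Sum>k\<in>blockA n. bump k x)"
  unfolding densA_def bump_def by simp

lemma nn_integral_sum_bump:
  assumes n: "1 \<le> n" and nonneg: "\<And>k. k \<in> blockA n \<Longrightarrow> 0 \<le> \<kappa> k"
  shows "(\<integral>\<^sup>+x. ennreal (\<Sum>k\<in>blockA n. bump k x * \<kappa> k) \<partial>lborel) = ennreal (\<Sum>k\<in>blockA n. mass k * \<kappa> k)"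
proof -
  have int: "integrable lborel (\<lambda>x. \<Sum>k\<in>blockA n. bump k x * \<kappa> k)"
    using integrable_bump blockA_ge_1[OF _ n] by (intro Bochner_Integration.integrable_sum) auto
  have "(\<integral>\<^sup>+x. ennreal (\<Sum>k\<in>blockA n. bump k x * \<kappa> k) \<partial>lborel) =
      ennreal (\<integral>x. (\<Sum>k\<in>blockA n. bump k x * \<kappa> k) \<partial>lborel)"
    using bump_nonneg nonneg blockA_ge_1[OF _ n]
    by (intro nn_integral_eq_integral[OF int] AE_I2 sum_nonneg mult_nonneg_nonneg) auto
  also have "(\<integral>x. (\<Sum>k\<in>blockA n. bump k x * \<kappa> k) \<partial>lborel) = (\<Sum>k\<in>blockA n. mass k * \<kappa> k)"
    unfolding mass_def
    by (subst Bochner_Integration.integral_sum) (auto intro: integrable_bump dest: blockA_ge_1[OF _ n])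
  finally show ?thesis .
qed

lemma nn_integral2_sum_bump:
  assumes n1: "1 \<le> n1" and n2: "1 \<le> n2"
    and nonneg: "\<And>i j. i \<in> blockA n1 \<Longrightarrow> j \<in> blockA n2 \<Longrightarrow> 0 \<le> C i j"
  shows "(\<integral>\<^sup>+x. \<integral>\<^sup>+y. ennreal (\<Sum>i\<in>blockA n1. \<Sum>j\<in>blockA n2. bump i x * bump j y * C i j) \<partial>lborel \<partial>lborel)
        = ennreal (\<Sum>i\<in>blockA n1. \<Sum>j\<in>blockA n2. mass i * mass j * C i j)"
proof -
  have swap: "(\<Sum>i\<in>blockA n1. \<Sum>j\<in>blockA n2. a i * b j * C i j) =
      (\<Sum>j\<in>blockA n2. b j * (\<Sum>i\<in>blockA n1. a i * C i j))" for a b :: "nat \<Rightarrow> real"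
    by (subst sum.swap) (simp add: sum_distrib_left mult_ac)
  have inner: "(\<integral>\<^sup>+y. ennreal (\<Sum>i\<in>blockA n1. \<Sum>j\<in>blockA n2. bump i x * bump j y * C i j) \<partial>lborel)
      = ennreal (\<Sum>i\<in>blockA n1. bump i x * (\<Sum>j\<in>blockA n2. mass j * C i j))" for x
  proof -
    have "(\<integral>\<^sup>+y. ennreal (\<Sum>i\<in>blockA n1. \<Sum>j\<in>blockA n2. bump i x * bump j y * C i j) \<partial>lborel)
        = ennreal (\<Sum>j\<in>blockA n2. mass j * (\<Sum>i\<in>blockA n1. bump i x * C i j))"
      unfolding swap using bump_nonneg nonneg blockA_ge_1[OF _ n1]
      by (intro nn_integral_sum_bump[OF n2] sum_nonneg mult_nonneg_nonneg) auto
    also have "(\<Sum>j\<in>blockA n2. mass j * (\<Sum>i\<in>blockA n1. bump i x * C i j)) =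
        (\<Sum>i\<in>blockA n1. bump i x * (\<Sum>j\<in>blockA n2. mass j * C i j))"
      using swap[of "\<lambda>i. bump i x" mass] by (simp add: sum_distrib_left mult_ac)
    finally show ?thesis .
  qed
  have "(\<integral>\<^sup>+x. \<integral>\<^sup>+y. ennreal (\<Sum>i\<in>blockA n1. \<Sum>j\<in>blockA n2. bump i x * bump j y * C i j) \<partial>lborel \<partial>lborel)
      = (\<integral>\<^sup>+x. ennreal (\<Sum>i\<in>blockA n1. bump i x * (\<Sum>j\<in>blockA n2. mass j * C i j)) \<partial>lborel)"
    by (simp only: inner)
  also have "\<dots> = ennreal (\<Sum>i\<in>blockA n1. mass i * (\<Sum>j\<in>blockA n2. mass j * C i j))"
    using mass_nonneg nonneg blockA_ge_1[OF _ n2]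
    by (intro nn_integral_sum_bump[OF n1] sum_nonneg mult_nonneg_nonneg) auto
  finally show ?thesis by (simp add: sum_distrib_left mult_ac)
qed

lemma emeasure_muA_Vset:
  assumes n: "1 \<le> n"
  shows "emeasure (muA c l f n) (Vset c l n) = ennreal (mean_mass n)"
proof -
  have "open (Vset c l n)"
    unfolding Vset_def interv_def by (intro open_UN ballI open_greaterThanLessThan)
  then have "emeasure (muA c l f n) (Vset c l n) =
      (\<integral>\<^sup>+x. ennreal (densA c l f n x) * indicator (Vset c l n) x \<partial>lborel)"
    unfolding muA_def by (intro emeasure_density) (auto simp: densA_eq)
  also have "\<dots> = (\<integral>\<^sup>+x. ennreal (\<Sum>k\<in>blockA n. bump k x * (1 / real (card (blockA n)))) \<partial>lborel)"
  proof (rule nn_integral_cong)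
    fix x
    have "bump k x = 0" if "k \<in> blockA n" "x \<notin> Vset c l n" for k
      using bump_nonzero_imp[of k x] that unfolding Vset_def by auto
    then show "ennreal (densA c l f n x) * indicator (Vset c l n) x =
        ennreal (\<Sum>k\<in>blockA n. bump k x * (1 / real (card (blockA n))))"
      unfolding densA_eq by (cases "x \<in> Vset c l n") (simp_all add: sum_distrib_left mult_ac)
  qed
  also have "\<dots> = ennreal (\<Sum>k\<in>blockA n. mass k * (1 / real (card (blockA n))))"
    by (rule nn_integral_sum_bump[OF n]) simp
  also have "\<dots> = ennreal (mean_mass n)" unfolding mean_mass_def by (simp add: sum_distrib_left mult_ac)
  finally show ?thesis .
qed

lemma muhat_eq_density:
  assumes n: "1 \<le> n" and W: "0 < total_mass n"
  shows "muhat c l f n = density lborel (\<lambda>x. ennreal (muhat_density n x))"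
  unfolding muhat_def
proof (intro arg_cong[where f="density lborel"] ext)
  fix x
  have M: "0 < mean_mass n" using W n by (simp add: mean_mass_eq)
  have "0 \<le> densA c l f n x" unfolding densA_eq using bump_nonneg blockA_ge_1[OF _ n]
    by (intro mult_nonneg_nonneg sum_nonneg) auto
  then have "ennreal (densA c l f n x) / emeasure (muA c l f n) (Vset c l n) = ennreal (densA c l f n x / mean_mass n)"
    unfolding emeasure_muA_Vset[OF n] by (rule divide_ennreal[OF _ M])
  also have "densA c l f n x / mean_mass n = muhat_density n x"
    unfolding densA_eq muhat_density_def mean_mass_eq using n by (simp add: field_simps)
  finally show "ennreal (densA c l f n x) / emeasure (muA c l f n) (Vset c l n) = ennreal (muhat_density n x)" .
qed

lemma muhat_density_nonneg: "1 \<le> n \<Longrightarrow> 0 < total_mass n \<Longrightarrow> 0 \<le> muhat_density n x"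
  unfolding muhat_density_def using bump_nonneg blockA_ge_1
  by (intro divide_nonneg_pos sum_nonneg) auto

lemma muhat_density_measurable [measurable]: "muhat_density n \<in> borel_measurable borel"
  unfolding muhat_density_def by measurable

lemma log_energy_density:
  fixes g h :: "real \<Rightarrow> real"
  assumes [measurable]: "g \<in> borel_measurable borel" "h \<in> borel_measurable borel"
    and nonneg: "\<And>x. 0 \<le> g x" "\<And>x. 0 \<le> h x"
  shows "log_energy (density lborel (\<lambda>x. ennreal (g x))) (density lborel (\<lambda>x. ennreal (h x))) =
     (\<integral>\<^sup>+x. \<integral>\<^sup>+y. ennreal (g x) * (ennreal (h y) * ennreal (- ln \<bar>x - y\<bar>)) \<partial>lborel \<partial>lborel)"
proof -
  have inner_meas: "(\<lambda>x. \<integral>\<^sup>+ y. ennreal (h y) * ennreal (- ln \<bar>x - y\<bar>) \<partial>lborel) \<in> borel_measurable lborel"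
  proof -
    have "(\<lambda>p::real \<times> real. ennreal (h (snd p)) * ennreal (- ln \<bar>fst p - snd p\<bar>)) \<in> borel_measurable (lborel \<Otimes>\<^sub>M lborel)"
      by measurable
    then show ?thesis by (intro lborel.borel_measurable_nn_integral) (simp add: case_prod_beta')
  qed
  have "log_energy (density lborel (\<lambda>x. ennreal (g x))) (density lborel (\<lambda>x. ennreal (h x))) =
      (\<integral>\<^sup>+ x. (\<integral>\<^sup>+ y. ennreal (h y) * ennreal (- ln \<bar>x - y\<bar>) \<partial>lborel) \<partial>density lborel (\<lambda>x. ennreal (g x)))"
    unfolding log_energy_def by (simp add: nn_integral_density)
  also have "\<dots> = (\<integral>\<^sup>+ x. ennreal (g x) * (\<integral>\<^sup>+ y. ennreal (h y) * ennreal (- ln \<bar>x - y\<bar>) \<partial>lborel) \<partial>lborel)"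
    by (rule nn_integral_density) (auto intro: inner_meas)
  also have "\<dots> = (\<integral>\<^sup>+x. \<integral>\<^sup>+y. ennreal (g x) * (ennreal (h y) * ennreal (- ln \<bar>x - y\<bar>)) \<partial>lborel \<partial>lborel)"
    by (intro nn_integral_cong nn_integral_cmult[symmetric]) measurable
  finally show ?thesis .
qed

lemma log_energy_muhat_eq:
  assumes n1: "1 \<le> n1" "0 < total_mass n1" and n2: "1 \<le> n2" "0 < total_mass n2"
  shows "log_energy (muhat c l f n1) (muhat c l f n2) =
    (\<integral>\<^sup>+x. \<integral>\<^sup>+y. ennreal (\<Sum>i\<in>blockA n1. \<Sum>j\<in>blockA n2.
       bump i x * bump j y * (- ln \<bar>x - y\<bar> / (total_mass n1 * total_mass n2))) \<partial>lborel \<partial>lborel)"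
proof -
  have "ennreal (muhat_density n1 x) * (ennreal (muhat_density n2 y) * ennreal (- ln \<bar>x - y\<bar>)) =
      ennreal (\<Sum>i\<in>blockA n1. \<Sum>j\<in>blockA n2. bump i x * bump j y * (- ln \<bar>x - y\<bar> / (total_mass n1 * total_mass n2)))"
    for x y
  proof -
    have "muhat_density n1 x * (muhat_density n2 y * - ln \<bar>x - y\<bar>) =
        (\<Sum>i\<in>blockA n1. \<Sum>j\<in>blockA n2. bump i x * bump j y) * (- ln \<bar>x - y\<bar> / (total_mass n1 * total_mass n2))"
      unfolding muhat_density_def sum_product[symmetric] by simp
    also have "\<dots> = (\<Sum>i\<in>blockA n1. \<Sum>j\<in>blockA n2.
        bump i x * bump j y * (- ln \<bar>x - y\<bar> / (total_mass n1 * total_mass n2)))"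
      by (simp only: sum_distrib_right)
    finally show ?thesis
      using muhat_density_nonneg[OF n1, of x] muhat_density_nonneg[OF n2, of y]
      by (simp only: ennreal_mult'[symmetric])
  qed
  then show ?thesis
    unfolding muhat_eq_density[OF n1] muhat_eq_density[OF n2]
    using muhat_density_nonneg[OF n1] muhat_density_nonneg[OF n2] by (simp add: log_energy_density)
qed

lemma bump_product_log_bounds:
  assumes i: "i \<in> blockA n1" and j: "j \<in> blockA n2" and n: "1 \<le> n1" "1 \<le> n2"
    and e: "0 < e" "e \<le> 1/2" and sep: "l i + l j < e * (2 * \<bar>c i - c j\<bar>)"
  shows "bump i x * bump j y * max 0 (centre_log i j - e) \<le> bump i x * bump j y * - ln \<bar>x - y\<bar>"
    and "bump i x * bump j y * - ln \<bar>x - y\<bar> \<le> bump i x * bump j y * (centre_log i j + 2 * e)"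
proof -
  have prod: "0 \<le> bump i x * bump j y" using bump_nonneg blockA_ge_1 i j n by simp
  have "bump i x * bump j y * max 0 (centre_log i j - e) \<le> bump i x * bump j y * - ln \<bar>x - y\<bar> \<and>
     bump i x * bump j y * - ln \<bar>x - y\<bar> \<le> bump i x * bump j y * (centre_log i j + 2 * e)"
  proof (cases "bump i x = 0 \<or> bump j y = 0")
    case False
    then have x: "x \<in> interv c l i" "x \<in> {0..1}" and y: "y \<in> interv c l j" "y \<in> {0..1}"
      using bump_nonzero_imp by blast+
    have "\<bar>x - c i\<bar> < l i / 2" "\<bar>y - c j\<bar> < l j / 2"
      using x y unfolding interv_def abs_less_iff by auto
    note perturb = minus_ln_dist_perturb[OF this e sep]
    have "0 \<le> - ln \<bar>x - y\<bar>" using x y by (intro minus_ln_nonneg) auto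
    then have "max 0 (centre_log i j - e) \<le> - ln \<bar>x - y\<bar>" "- ln \<bar>x - y\<bar> \<le> centre_log i j + 2 * e"
      using perturb unfolding centre_log_def by simp_all
    then show ?thesis using mult_left_mono[OF _ prod] by blast
  qed auto
  then show "bump i x * bump j y * max 0 (centre_log i j - e) \<le> bump i x * bump j y * - ln \<bar>x - y\<bar>"
     "bump i x * bump j y * - ln \<bar>x - y\<bar> \<le> bump i x * bump j y * (centre_log i j + 2 * e)"
    by auto
qed

lemma sum_mass_product_centre_log_shift:
  assumes "0 < total_mass n1" "0 < total_mass n2"
  shows "(\<Sum>i\<in>blockA n1. \<Sum>j\<in>blockA n2. mass i * mass j * ((centre_log i j + a) / (total_mass n1 * total_mass n2))) =
    discrete_energy n1 n2 + a"
proof -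
  let ?W = "total_mass n1 * total_mass n2"
  have "(\<Sum>i\<in>blockA n1. \<Sum>j\<in>blockA n2. mass i * mass j * ((centre_log i j + a) / ?W)) =
      (\<Sum>i\<in>blockA n1. \<Sum>j\<in>blockA n2. mass i * mass j * centre_log i j) / ?W +
      a * (\<Sum>i\<in>blockA n1. \<Sum>j\<in>blockA n2. mass i * mass j) / ?W"
    by (simp add: sum_divide_distrib sum_distrib_left sum.distrib add_divide_distrib distrib_left mult_ac)
  also have "(\<Sum>i\<in>blockA n1. \<Sum>j\<in>blockA n2. mass i * mass j) = ?W"
    unfolding total_mass_def by (simp add: sum_product)
  finally show ?thesis using assms unfolding discrete_energy_def by simp
qed

lemma log_energy_muhat_bounds:
  assumes n1: "1 \<le> n1" "0 < total_mass n1" and n2: "1 \<le> n2" "0 < total_mass n2"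
    and e: "0 < e" "e \<le> 1/2"
    and sep: "\<forall>i\<in>blockA n1. \<forall>j\<in>blockA n2. l i + l j < e * (2 * \<bar>c i - c j\<bar>)"
  shows "ennreal (discrete_energy n1 n2 - e) \<le> log_energy (muhat c l f n1) (muhat c l f n2)"
    and "log_energy (muhat c l f n1) (muhat c l f n2) \<le> ennreal (discrete_energy n1 n2 + 2 * e)"
proof -
  define W where "W = total_mass n1 * total_mass n2"
  have W: "0 < W" unfolding W_def using n1 n2 by simp
  have lower: "bump i x * bump j y * (max 0 (centre_log i j - e) / W) \<le> bump i x * bump j y * (- ln \<bar>x - y\<bar> / W)"
    and upper: "bump i x * bump j y * (- ln \<bar>x - y\<bar> / W) \<le> bump i x * bump j y * ((centre_log i j + 2 * e) / W)"
    if "i \<in> blockA n1" "j \<in> blockA n2" for i j x y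
    using bump_product_log_bounds[OF that n1(1) n2(1) e sep[rule_format, OF that], of x y] W
    by (metis divide_right_mono less_imp_le times_divide_eq_right)+
  have "ennreal (discrete_energy n1 n2 - e) \<le>
      ennreal (\<Sum>i\<in>blockA n1. \<Sum>j\<in>blockA n2. mass i * mass j * (max 0 (centre_log i j - e) / W))"
  proof (rule ennreal_leI)
    have "discrete_energy n1 n2 - e = (\<Sum>i\<in>blockA n1. \<Sum>j\<in>blockA n2. mass i * mass j * ((centre_log i j - e) / W))"
      using sum_mass_product_centre_log_shift[OF n1(2) n2(2), of "- e"] unfolding W_def by simp
    also have "\<dots> \<le> (\<Sum>i\<in>blockA n1. \<Sum>j\<in>blockA n2. mass i * mass j * (max 0 (centre_log i j - e) / W))"
      using W mass_nonneg blockA_ge_1 n1 n2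
      by (intro sum_mono mult_left_mono divide_right_mono) (auto intro: mult_nonneg_nonneg)
    finally show "discrete_energy n1 n2 - e \<le> \<dots>" .
  qed
  also have "\<dots> = (\<integral>\<^sup>+x. \<integral>\<^sup>+y. ennreal (\<Sum>i\<in>blockA n1. \<Sum>j\<in>blockA n2.
      bump i x * bump j y * (max 0 (centre_log i j - e) / W)) \<partial>lborel \<partial>lborel)"
    using W by (intro nn_integral2_sum_bump[OF n1(1) n2(1), symmetric]) simp
  also have "\<dots> \<le> log_energy (muhat c l f n1) (muhat c l f n2)"
    unfolding log_energy_muhat_eq[OF n1 n2] W_def[symmetric]
    by (intro nn_integral_mono ennreal_leI sum_mono lower)
  finally show "ennreal (discrete_energy n1 n2 - e) \<le> log_energy (muhat c l f n1) (muhat c l f n2)" .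
  have "log_energy (muhat c l f n1) (muhat c l f n2) \<le> (\<integral>\<^sup>+x. \<integral>\<^sup>+y. ennreal (\<Sum>i\<in>blockA n1. \<Sum>j\<in>blockA n2.
      bump i x * bump j y * ((centre_log i j + 2 * e) / W)) \<partial>lborel \<partial>lborel)"
    unfolding log_energy_muhat_eq[OF n1 n2] W_def[symmetric]
    by (intro nn_integral_mono ennreal_leI sum_mono upper)
  also have "\<dots> = ennreal (\<Sum>i\<in>blockA n1. \<Sum>j\<in>blockA n2. mass i * mass j * ((centre_log i j + 2 * e) / W))"
  proof (intro nn_integral2_sum_bump[OF n1(1) n2(1)] divide_nonneg_pos[OF _ W])
    fix i j assume "i \<in> blockA n1" "j \<in> blockA n2"
    then show "0 \<le> centre_log i j + 2 * e"
      unfolding centre_log_def using dist_c_le_1 n1 n2 e minus_ln_nonneg[of "\<bar>c i - c j\<bar>"] by force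
  qed
  also have "\<dots> = ennreal (discrete_energy n1 n2 + 2 * e)"
    using sum_mass_product_centre_log_shift[OF n1(2) n2(2)] unfolding W_def by simp
  finally show "log_energy (muhat c l f n1) (muhat c l f n2) \<le> ennreal (discrete_energy n1 n2 + 2 * e)" .
qed

definition mean_discrete_energy :: "nat \<Rightarrow> nat \<Rightarrow> real" where
  "mean_discrete_energy n1 n2 = (1 / (real (card (blockA n1)) * real (card (blockA n2)))) *
      (\<Sum>i\<in>blockA n1. \<Sum>j\<in>blockA n2. mass i * mass j * centre_log i j)"

lemma discrete_energy_eq:
  "1 \<le> n1 \<Longrightarrow> 1 \<le> n2 \<Longrightarrow> discrete_energy n1 n2 = mean_discrete_energy n1 n2 / (mean_mass n1 * mean_mass n2)"
  unfolding discrete_energy_def mean_discrete_energy_def mean_mass_eq by (simp add: field_simps)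

lemma mass_log_sub_trunc_kernel_le:
  assumes ij: "1 \<le> i" "1 \<le> j" "c i \<noteq> c j" "\<bar>c i - c j\<bar> \<le> 1"
  shows "\<bar>mass i * mass j * centre_log i j - trunc_kernel k (c i, c j)\<bar> \<le>
    - ln (trunc_level k) * f_max * (\<bar>mass i - f_ext (c i)\<bar> + \<bar>mass j - f_ext (c j)\<bar>) +
    f_max * f_max * (if \<bar>c i - c j\<bar> < trunc_level k then centre_log i j else 0)"
proof -
  define B where "B = - ln (trunc_level k)"
  define K where "K = trunc_log k (c i, c j)"
  define R where "R = (if \<bar>c i - c j\<bar> < trunc_level k then centre_log i j else 0)"
  have K: "0 \<le> K" "K \<le> B" "K \<le> centre_log i j"
    unfolding K_def B_def centre_log_def
    using trunc_log_nonneg trunc_log_le_bound trunc_log_le_minus_ln ij(3,4) by auto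
  have "centre_log i j - K \<le> R"
  proof (cases "\<bar>c i - c j\<bar> < trunc_level k")
    case False
    then have "K = centre_log i j" unfolding K_def centre_log_def
      by (intro trunc_log_eq_minus_ln) (use ij in auto)
    then show ?thesis unfolding R_def using False by simp
  qed (use K in \<open>simp add: R_def\<close>)
  have m: "0 \<le> mass i" "mass i \<le> f_max" "0 \<le> mass j" "mass j \<le> f_max"
    using mass_nonneg mass_le_f_max ij by auto
  have fj: "0 \<le> f_ext (c j)" "f_ext (c j) \<le> f_max" using f_ext_pos[of "c j"] f_ext_le_f_max[of "c j"] by auto
  have "mass i * mass j * centre_log i j - trunc_kernel k (c i, c j) =
      (mass i * (mass j - f_ext (c j)) + f_ext (c j) * (mass i - f_ext (c i))) * K + mass i * mass j * (centre_log i j - K)"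
    unfolding trunc_kernel_def K_def by (simp add: algebra_simps)
  moreover have "\<bar>(mass i * (mass j - f_ext (c j)) + f_ext (c j) * (mass i - f_ext (c i))) * K\<bar> \<le>
      (f_max * \<bar>mass j - f_ext (c j)\<bar> + f_max * \<bar>mass i - f_ext (c i)\<bar>) * B"
  proof -
    have "\<bar>mass i * (mass j - f_ext (c j)) + f_ext (c j) * (mass i - f_ext (c i))\<bar> \<le>
        f_max * \<bar>mass j - f_ext (c j)\<bar> + f_max * \<bar>mass i - f_ext (c i)\<bar>"
      using m fj by (intro order_trans[OF abs_triangle_ineq add_mono]) (auto simp: abs_mult mult_right_mono)
    then show ?thesis using K f_max_pos by (simp add: abs_mult mult_mono)
  qed
  moreover have "\<bar>mass i * mass j * (centre_log i j - K)\<bar> \<le> f_max * f_max * R"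
    using m K \<open>centre_log i j - K \<le> R\<close> by (simp add: abs_mult mult_mono)
  ultimately show ?thesis unfolding B_def[symmetric] R_def[symmetric] by (simp add: algebra_simps)
qed

lemma abs_mean_discrete_energy_sub_le:
  assumes n1: "1 \<le> n1" and n2: "1 \<le> n2"
    and distinct: "\<forall>i\<in>blockA n1. \<forall>j\<in>blockA n2. i \<noteq> j \<and> c i \<noteq> c j"
  shows "\<bar>mean_discrete_energy n1 n2 - block_avg2 n1 n2 (trunc_kernel k)\<bar> \<le>
    - ln (trunc_level k) * f_max * (mass_deviation n1 + mass_deviation n2) +
    f_max * f_max * near_diag_log n1 n2 (trunc_level k)"
proof -
  define B where "B = - ln (trunc_level k)"
  define C where "C = 1 / (real (card (blockA n1)) * real (card (blockA n2)))"
  define R where "R i j = (if i \<noteq> j \<and> \<bar>c i - c j\<bar> < trunc_level k then centre_log i j else 0)" for i j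
  have C: "0 \<le> C" unfolding C_def by simp
  have sums: "\<bar>\<Sum>i\<in>blockA n1. \<Sum>j\<in>blockA n2. mass i * mass j * centre_log i j - trunc_kernel k (c i, c j)\<bar> \<le>
      (\<Sum>i\<in>blockA n1. \<Sum>j\<in>blockA n2. B * f_max * \<bar>mass i - f_ext (c i)\<bar> + B * f_max * \<bar>mass j - f_ext (c j)\<bar> +
        f_max * f_max * R i j)"
  proof (rule order_trans[OF sum_abs sum_mono[OF order_trans[OF sum_abs sum_mono]]])
    fix i j assume i: "i \<in> blockA n1" and j: "j \<in> blockA n2"
    then show "\<bar>mass i * mass j * centre_log i j - trunc_kernel k (c i, c j)\<bar> \<le>
        B * f_max * \<bar>mass i - f_ext (c i)\<bar> + B * f_max * \<bar>mass j - f_ext (c j)\<bar> + f_max * f_max * R i j"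
      using mass_log_sub_trunc_kernel_le[of i j k] blockA_ge_1[OF i n1] blockA_ge_1[OF j n2]
        distinct dist_c_le_1[OF i j n1 n2]
      unfolding B_def R_def by (simp add: distrib_left)
  qed
  have "mean_discrete_energy n1 n2 - block_avg2 n1 n2 (trunc_kernel k) =
      C * (\<Sum>i\<in>blockA n1. \<Sum>j\<in>blockA n2. mass i * mass j * centre_log i j - trunc_kernel k (c i, c j))"
    unfolding mean_discrete_energy_def block_avg2_def C_def by (simp add: sum_subtractf right_diff_distrib)
  then have "\<bar>mean_discrete_energy n1 n2 - block_avg2 n1 n2 (trunc_kernel k)\<bar> =
      C * \<bar>\<Sum>i\<in>blockA n1. \<Sum>j\<in>blockA n2. mass i * mass j * centre_log i j - trunc_kernel k (c i, c j)\<bar>"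
    using C by (simp add: abs_mult)
  also have "\<dots> \<le> C * (\<Sum>i\<in>blockA n1. \<Sum>j\<in>blockA n2. B * f_max * \<bar>mass i - f_ext (c i)\<bar> +
      B * f_max * \<bar>mass j - f_ext (c j)\<bar> + f_max * f_max * R i j)"
    by (rule mult_left_mono[OF sums C])
  also have "\<dots> = B * f_max * (C * (\<Sum>i\<in>blockA n1. \<Sum>j\<in>blockA n2. \<bar>mass i - f_ext (c i)\<bar>)) +
      B * f_max * (C * (\<Sum>i\<in>blockA n1. \<Sum>j\<in>blockA n2. \<bar>mass j - f_ext (c j)\<bar>)) +
      f_max * f_max * (C * (\<Sum>i\<in>blockA n1. \<Sum>j\<in>blockA n2. R i j))"
    by (simp add: sum.distrib sum_distrib_left distrib_left mult_ac)
  also have "C * (\<Sum>i\<in>blockA n1. \<Sum>j\<in>blockA n2. \<bar>mass i - f_ext (c i)\<bar>) = mass_deviation n1"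
    unfolding C_def mass_deviation_def using n2 by (simp add: sum_distrib_left)
  also have "C * (\<Sum>i\<in>blockA n1. \<Sum>j\<in>blockA n2. \<bar>mass j - f_ext (c j)\<bar>) = mass_deviation n2"
    unfolding C_def mass_deviation_def using n1 by (subst sum.swap) (simp add: sum_distrib_left)
  also have "C * (\<Sum>i\<in>blockA n1. \<Sum>j\<in>blockA n2. R i j) = near_diag_log n1 n2 (trunc_level k)"
    unfolding R_def C_def near_diag_log_def centre_log_def card_cartesian_product
    by (simp only: sum.inter_filter[OF finite_blockA] of_nat_mult)
  finally show ?thesis unfolding B_def by (simp add: algebra_simps)
qed

section \<open>Convergence of the off-diagonal averages\<close>

lemma A3_pow2_blocks:
  assumes "\<epsilon> > 0"
  shows "\<forall>\<^sub>F m in sequentially. \<forall>s<q m. \<forall>t<q m. s \<noteq> t \<longrightarrow>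
    (\<forall>i\<in>blockA (2^s*m). \<forall>j\<in>blockA (2^t*m). i \<noteq> j \<and> l i + l j < \<epsilon> * (2 * \<bar>c i - c j\<bar>))"
  using A3[rule_format, OF assms]
proof eventually_elim
  case (elim m)
  show ?case
  proof (intro allI impI ballI conjI)
    fix s t i j assume st: "s < q m" "t < q m" "s \<noteq> t" and i: "i \<in> blockA (2^s*m)" and j: "j \<in> blockA (2^t*m)"
    show "i \<noteq> j" using blockA_pow2_disjoint[OF st(3)] i j by (metis disjoint_iff)
    moreover have "i \<in> blockAq m (q m)" "j \<in> blockAq m (q m)"
      using blockA_subset_blockAq[of s "q m" m] blockA_subset_blockAq[of t "q m" m] st i j by auto
    ultimately show "l i + l j < \<epsilon> * (2 * \<bar>c i - c j\<bar>)" using elim by blast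
  qed
qed

lemma pow2_blocks_distinct_centres:
  "\<forall>\<^sub>F m in sequentially. \<forall>s<q m. \<forall>t<q m. s \<noteq> t \<longrightarrow>
    (\<forall>i\<in>blockA (2^s*m). \<forall>j\<in>blockA (2^t*m). i \<noteq> j \<and> c i \<noteq> c j)"
  using A3_pow2_blocks[OF zero_less_one] eventually_ge_at_top[of 1]
proof eventually_elim
  case (elim m)
  show ?case
  proof (intro allI impI ballI conjI)
    fix s t i j assume st: "s < q m" "t < q m" "s \<noteq> t" and i: "i \<in> blockA (2^s*m)" and j: "j \<in> blockA (2^t*m)"
    have sep: "i \<noteq> j \<and> l i + l j < 1 * (2 * \<bar>c i - c j\<bar>)" using elim(1)[rule_format, OF st i j] .
    then show "i \<noteq> j" ..
    have "0 < l i" "0 < l j"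
      using l_gt_0 blockA_ge_1[OF i] blockA_ge_1[OF j] le_pow2_mult[OF elim(2)] by auto
    then show "c i \<noteq> c j" using sep by auto
  qed
qed

lemma abs_mean_discrete_energy_sub_energy_le:
  assumes n: "1 \<le> n1" "1 \<le> n2" and distinct: "\<forall>i\<in>blockA n1. \<forall>j\<in>blockA n2. i \<noteq> j \<and> c i \<noteq> c j"
    and deviation: "mass_deviation n1 < e" "mass_deviation n2 < e" "- ln (trunc_level k) * f_max * (e + e) \<le> \<epsilon>"
    and near_diag: "near_diag_log n1 n2 (trunc_level k) < \<epsilon>"
    and avg2: "\<bar>block_avg2 n1 n2 (trunc_kernel k) - phi_integral2 (trunc_kernel k)\<bar> < \<epsilon>"
    and approx: "energy_f_phi_real \<le> phi_integral2 (trunc_kernel k) + f_max * f_max * \<epsilon>"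
  shows "\<bar>mean_discrete_energy n1 n2 - energy_f_phi_real\<bar> < \<epsilon> * (2 + 2 * f_max * f_max)"
proof -
  define B where "B = - ln (trunc_level k)"
  have B: "0 \<le> B" unfolding B_def using trunc_level_pos[of k] trunc_level_le_1[of k] by (intro minus_ln_nonneg) auto
  have "\<bar>mean_discrete_energy n1 n2 - block_avg2 n1 n2 (trunc_kernel k)\<bar> \<le>
      B * f_max * (mass_deviation n1 + mass_deviation n2) + f_max * f_max * near_diag_log n1 n2 (trunc_level k)"
    unfolding B_def by (rule abs_mean_discrete_energy_sub_le[OF n distinct])
  also have "\<dots> \<le> \<epsilon> + f_max * f_max * \<epsilon>"
  proof (intro add_mono)
    have "B * f_max * (mass_deviation n1 + mass_deviation n2) \<le> B * f_max * (e + e)"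
      using deviation B f_max_pos by (intro mult_left_mono add_mono) auto
    moreover have "B * f_max * (e + e) \<le> \<epsilon>" using deviation(3) unfolding B_def .
    ultimately show "B * f_max * (mass_deviation n1 + mass_deviation n2) \<le> \<epsilon>" by linarith
    show "f_max * f_max * near_diag_log n1 n2 (trunc_level k) \<le> f_max * f_max * \<epsilon>"
      using near_diag f_max_pos by (intro mult_left_mono) auto
  qed
  finally show ?thesis
    using avg2 approx phi_integral2_trunc_le_energy[of k] unfolding abs_le_iff abs_less_iff
    by (simp add: algebra_simps)
qed

lemma mean_discrete_energy_close:
  assumes "\<tau> > 0"
  shows "\<forall>\<^sub>F m in sequentially. \<forall>s<q m. \<forall>t<q m. s \<noteq> t \<longrightarrow>
    \<bar>mean_discrete_energy (2^s*m) (2^t*m) - energy_f_phi_real\<bar> < \<tau>"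
proof -
  define \<epsilon> where "\<epsilon> = \<tau> / (3 + 2 * f_max * f_max)"
  have "0 < 3 + 2 * f_max * f_max" using f_max_pos by (simp add: add_pos_nonneg)
  then have \<epsilon>: "\<epsilon> > 0" "\<epsilon> * (2 + 2 * f_max * f_max) \<le> \<tau>"
    unfolding \<epsilon>_def using assms by (simp_all add: divide_le_eq mult_le_cancel_left)
  obtain k where k: "near_diag_negligible k \<epsilon>"
    "energy_f_phi_real \<le> phi_integral2 (trunc_kernel k) + f_max * f_max * \<epsilon>"
    using energy_f_phi_real_approx[OF \<epsilon>(1)] by blast
  define B where "B = - ln (trunc_level k)"
  have B: "0 \<le> B" unfolding B_def using trunc_level_pos[of k] trunc_level_le_1[of k] by (intro minus_ln_nonneg) auto
  define e where "e = \<epsilon> / (2 * B * f_max + 1)"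
  have den: "0 < 2 * B * f_max + 1" using B f_max_pos by (simp add: add_nonneg_pos)
  have e: "e > 0" "B * f_max * (e + e) \<le> \<epsilon>"
  proof -
    show "e > 0" unfolding e_def using \<epsilon> den by simp
    have "B * f_max * (e + e) = \<epsilon> * ((2 * B * f_max) / (2 * B * f_max + 1))"
      unfolding e_def by (simp add: field_simps)
    also have "\<dots> \<le> \<epsilon> * 1" using den \<epsilon> by (intro mult_left_mono) auto
    finally show "B * f_max * (e + e) \<le> \<epsilon>" by simp
  qed
  have "\<forall>\<^sub>F m in sequentially. (\<forall>s<q m. \<forall>t<q m. s \<noteq> t \<longrightarrow>
      (\<forall>i\<in>blockA (2^s*m). \<forall>j\<in>blockA (2^t*m). i \<noteq> j \<and> c i \<noteq> c j)) \<and>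
      (\<forall>a\<le>q m. \<forall>b\<le>q m. near_diag_log (2^a*m) (2^b*m) (trunc_level k) < \<epsilon>) \<and>
      (\<forall>s. dist (mass_deviation (2^s*m)) 0 < e) \<and>
      (\<forall>s t. dist (block_avg2 (2^s*m) (2^t*m) (trunc_kernel k)) (phi_integral2 (trunc_kernel k)) < \<epsilon>) \<and>
      1 \<le> m"
  proof (intro eventually_conj)
    show "\<forall>\<^sub>F m in sequentially. \<forall>s. dist (mass_deviation (2^s*m)) 0 < e"
      by (rule eventually_sequentially_pow2_mult[OF tendstoD[OF mass_deviation_tendsto_0 e(1)]])
    show "\<forall>\<^sub>F m in sequentially. \<forall>s t. dist (block_avg2 (2^s*m) (2^t*m) (trunc_kernel k)) (phi_integral2 (trunc_kernel k)) < \<epsilon>"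
      by (rule eventually_prod_sequentially_pow2_mult[where P="\<lambda>a b. dist (block_avg2 a b (trunc_kernel k)) (phi_integral2 (trunc_kernel k)) < \<epsilon>",
            OF tendstoD[OF block_avg2_tendsto[OF trunc_kernel_continuous] \<epsilon>(1)]])
    show "\<forall>\<^sub>F m in sequentially. \<forall>a\<le>q m. \<forall>b\<le>q m. near_diag_log (2^a*m) (2^b*m) (trunc_level k) < \<epsilon>"
      using k(1) unfolding near_diag_negligible_def .
  qed (rule pow2_blocks_distinct_centres, rule eventually_ge_at_top)
  then show ?thesis
  proof eventually_elim
    case (elim m)
    note distinct = elim[THEN conjunct1] and near_diag = elim[THEN conjunct2, THEN conjunct1]
      and deviation = elim[THEN conjunct2, THEN conjunct2, THEN conjunct1]
      and avg2 = elim[THEN conjunct2, THEN conjunct2, THEN conjunct2, THEN conjunct1]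
      and m = elim[THEN conjunct2, THEN conjunct2, THEN conjunct2, THEN conjunct2]
    show ?case
    proof (intro allI impI)
      fix s t assume st: "s < q m" "t < q m" "s \<noteq> t"
      have "\<bar>mean_discrete_energy (2^s*m) (2^t*m) - energy_f_phi_real\<bar> < \<epsilon> * (2 + 2 * f_max * f_max)"
      proof (rule abs_mean_discrete_energy_sub_energy_le)
        show "1 \<le> 2^s*m" "1 \<le> 2^t*m" using le_pow2_mult[OF m] by auto
        show "mass_deviation (2^s*m) < e" "mass_deviation (2^t*m) < e"
          using deviation[rule_format, of s] deviation[rule_format, of t] by (simp_all add: dist_real_def)
        show "\<bar>block_avg2 (2^s*m) (2^t*m) (trunc_kernel k) - phi_integral2 (trunc_kernel k)\<bar> < \<epsilon>"
          using avg2 by (simp add: dist_real_def)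
      qed (use distinct[rule_format, OF st] near_diag st k(2) e(2) B_def in auto)
      then show "\<bar>mean_discrete_energy (2^s*m) (2^t*m) - energy_f_phi_real\<bar> < \<tau>" using \<epsilon>(2) by linarith
    qed
  qed
qed

definition limit_energy :: real where
  "limit_energy = energy_f_phi_real / f_phi_integral^2"

lemma limit_energy_nonneg: "0 \<le> limit_energy"
  unfolding limit_energy_def using energy_f_phi_real_nonneg by simp

lemma discrete_energy_close:
  assumes "\<tau> > 0"
  shows "\<forall>\<^sub>F m in sequentially. \<forall>s<q m. \<forall>t<q m. s \<noteq> t \<longrightarrow>
    0 < total_mass (2^s*m) \<and> 0 < total_mass (2^t*m) \<and>
    \<bar>discrete_energy (2^s*m) (2^t*m) - limit_energy\<bar> < \<tau>"
proof -
  obtain \<delta> where \<delta>: "\<delta> > 0" "\<And>a b c. \<bar>a - energy_f_phi_real\<bar> < \<delta> \<Longrightarrow> \<bar>b - f_phi_integral\<bar> < \<delta> \<Longrightarrow>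
      \<bar>c - f_phi_integral\<bar> < \<delta> \<Longrightarrow> \<bar>a / (b * c) - limit_energy\<bar> < \<tau>"
    using ratio_eps_delta[OF f_phi_integral_pos assms, of energy_f_phi_real]
    unfolding limit_energy_def power2_eq_square by blast
  define \<delta>' where "\<delta>' = min \<delta> (f_phi_integral / 2)"
  have \<delta>': "\<delta>' > 0" "\<delta>' \<le> \<delta>" "\<delta>' \<le> f_phi_integral / 2"
    unfolding \<delta>'_def using \<delta>(1) f_phi_integral_pos by auto
  have "\<forall>\<^sub>F m in sequentially. (\<forall>s<q m. \<forall>t<q m. s \<noteq> t \<longrightarrow>
      \<bar>mean_discrete_energy (2^s*m) (2^t*m) - energy_f_phi_real\<bar> < \<delta>') \<and>
      (\<forall>s. dist (mean_mass (2^s*m)) f_phi_integral < \<delta>') \<and> 1 \<le> m"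
    by (intro eventually_conj mean_discrete_energy_close[OF \<delta>'(1)] eventually_ge_at_top
        eventually_sequentially_pow2_mult[OF tendstoD[OF mean_mass_tendsto \<delta>'(1)]])
  then show ?thesis
  proof eventually_elim
    case (elim m)
    note energy = elim[THEN conjunct1] and masses = elim[THEN conjunct2, THEN conjunct1]
      and m = elim[THEN conjunct2, THEN conjunct2]
    show ?case
    proof (intro allI impI)
      fix s t assume st: "s < q m" "t < q m" "s \<noteq> t"
      have n: "1 \<le> 2^s*m" "1 \<le> 2^t*m" using le_pow2_mult[OF m] by auto
      have M: "\<bar>mean_mass (2^s*m) - f_phi_integral\<bar> < \<delta>'" "\<bar>mean_mass (2^t*m) - f_phi_integral\<bar> < \<delta>'"
        using masses[rule_format, of s] masses[rule_format, of t] by (simp_all add: dist_real_def)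
      then have "0 < mean_mass (2^s*m)" "0 < mean_mass (2^t*m)" using \<delta>'(3) by linarith+
      moreover have "total_mass n = mean_mass n * real n" if "1 \<le> n" for n
        using that by (simp add: mean_mass_eq)
      ultimately have "0 < total_mass (2^s*m)" "0 < total_mass (2^t*m)"
        using n by (metis mult_pos_pos of_nat_0_less_iff less_le_trans zero_less_one)+
      moreover have "\<bar>discrete_energy (2^s*m) (2^t*m) - limit_energy\<bar> < \<tau>"
        unfolding discrete_energy_eq[OF n] using energy[rule_format, OF st] M \<delta>'(2) by (intro \<delta>(2)) auto
      ultimately show "0 < total_mass (2^s*m) \<and> 0 < total_mass (2^t*m) \<and>
          \<bar>discrete_energy (2^s*m) (2^t*m) - limit_energy\<bar> < \<tau>" by blast
    qed
  qed
qed

lemma log_energy_muhat_close: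
  assumes "\<tau> > 0"
  shows "\<forall>\<^sub>F m in sequentially. \<forall>s<q m. \<forall>t<q m. s \<noteq> t \<longrightarrow>
    ennreal (limit_energy - \<tau>) \<le> log_energy (muhat c l f (2^s*m)) (muhat c l f (2^t*m)) \<and>
    log_energy (muhat c l f (2^s*m)) (muhat c l f (2^t*m)) \<le> ennreal (limit_energy + \<tau>)"
proof -
  define e where "e = min (1/2) (\<tau> / 4)"
  have e: "0 < e" "e \<le> 1/2" "e \<le> \<tau> / 4" unfolding e_def using assms by auto
  have "\<tau> / 2 > 0" using assms by simp
  have "\<forall>\<^sub>F m in sequentially. (\<forall>s<q m. \<forall>t<q m. s \<noteq> t \<longrightarrow>
      0 < total_mass (2^s*m) \<and> 0 < total_mass (2^t*m) \<and>
      \<bar>discrete_energy (2^s*m) (2^t*m) - limit_energy\<bar> < \<tau> / 2) \<and>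
      (\<forall>s<q m. \<forall>t<q m. s \<noteq> t \<longrightarrow>
      (\<forall>i\<in>blockA (2^s*m). \<forall>j\<in>blockA (2^t*m). i \<noteq> j \<and> l i + l j < e * (2 * \<bar>c i - c j\<bar>))) \<and> 1 \<le> m"
    by (intro eventually_conj discrete_energy_close[OF \<open>\<tau> / 2 > 0\<close>] A3_pow2_blocks[OF e(1)]
        eventually_ge_at_top)
  then show ?thesis
  proof eventually_elim
    case (elim m)
    note energy = elim[THEN conjunct1] and sep = elim[THEN conjunct2, THEN conjunct1]
      and m = elim[THEN conjunct2, THEN conjunct2]
    show ?case
    proof (intro allI impI)
      fix s t assume st: "s < q m" "t < q m" "s \<noteq> t"
      have n: "1 \<le> 2^s*m" "1 \<le> 2^t*m" using le_pow2_mult[OF m] by auto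
      note close = energy[rule_format, OF st]
      have "\<forall>i\<in>blockA (2^s*m). \<forall>j\<in>blockA (2^t*m). l i + l j < e * (2 * \<bar>c i - c j\<bar>)"
        using sep[rule_format, OF st] by blast
      note bounds = log_energy_muhat_bounds[OF n(1) _ n(2) _ e(1,2) this]
      have "ennreal (limit_energy - \<tau>) \<le> ennreal (discrete_energy (2^s*m) (2^t*m) - e)"
        using close e by (intro ennreal_leI) linarith
      also have "\<dots> \<le> log_energy (muhat c l f (2^s*m)) (muhat c l f (2^t*m))"
        using close by (intro bounds(1)) auto
      finally have "ennreal (limit_energy - \<tau>) \<le> log_energy (muhat c l f (2^s*m)) (muhat c l f (2^t*m))" .
      moreover have "log_energy (muhat c l f (2^s*m)) (muhat c l f (2^t*m)) \<le>
          ennreal (discrete_energy (2^s*m) (2^t*m) + 2 * e)"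
        using close by (intro bounds(2)) auto
      moreover have "ennreal (discrete_energy (2^s*m) (2^t*m) + 2 * e) \<le> ennreal (limit_energy + \<tau>)"
        using close e by (intro ennreal_leI) linarith
      ultimately show "ennreal (limit_energy - \<tau>) \<le> log_energy (muhat c l f (2^s*m)) (muhat c l f (2^t*m)) \<and>
          log_energy (muhat c l f (2^s*m)) (muhat c l f (2^t*m)) \<le> ennreal (limit_energy + \<tau>)"
        by (meson order_trans)
    qed
  qed
qed

lemma off_diagonal_average_log_energy_tendsto:
  "(\<lambda>m. (\<Sum>s\<in>{0..<q m}. \<Sum>t\<in>{0..<q m} - {s}. log_energy (muhat c l f (2^s*m)) (muhat c l f (2^t*m)))
      / ennreal ((real (card {0..<q m}))^2)) \<longlonglongrightarrow> ennreal limit_energy"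
proof (rule ennreal_tendsto_squeeze[OF limit_energy_nonneg])
  fix \<tau> :: real assume "\<tau> > 0"
  then have "\<tau> / 2 > 0" by simp
  obtain Q :: nat where Q: "limit_energy / (\<tau> / 2) < Q" using reals_Archimedean2 by blast
  have "\<forall>\<^sub>F m in sequentially. max Q 1 \<le> q m"
    using q_lim unfolding filterlim_at_top by blast
  with log_energy_muhat_close[OF \<open>\<tau> / 2 > 0\<close>]
  show "\<forall>\<^sub>F m in sequentially.
    ennreal (limit_energy - \<tau>) \<le> (\<Sum>s\<in>{0..<q m}. \<Sum>t\<in>{0..<q m} - {s}. log_energy (muhat c l f (2^s*m)) (muhat c l f (2^t*m)))
      / ennreal ((real (card {0..<q m}))^2) \<and>
    (\<Sum>s\<in>{0..<q m}. \<Sum>t\<in>{0..<q m} - {s}. log_energy (muhat c l f (2^s*m)) (muhat c l f (2^t*m)))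
      / ennreal ((real (card {0..<q m}))^2) \<le> ennreal (limit_energy + \<tau>)"
  proof eventually_elim
    case (elim m)
    define lo where "lo = max 0 (limit_energy - \<tau> / 2)"
    have q: "1 \<le> q m" "real Q \<le> real (q m)" using elim(2) by auto
    have lo: "0 \<le> lo" "lo \<le> limit_energy + \<tau> / 2" "lo \<le> limit_energy"
      unfolding lo_def using limit_energy_nonneg \<open>\<tau> > 0\<close> by auto
    have "ennreal lo = ennreal (limit_energy - \<tau> / 2)" unfolding lo_def by (simp add: max_def ennreal_neg)
    then have bounds: "ennreal lo \<le> log_energy (muhat c l f (2^s*m)) (muhat c l f (2^t*m)) \<and>
        log_energy (muhat c l f (2^s*m)) (muhat c l f (2^t*m)) \<le> ennreal (limit_energy + \<tau> / 2)"
      if "s < q m" "t < q m" "s \<noteq> t" for s t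
      using elim(1) that by simp
    note avg = off_diagonal_average_bounds[where E="\<lambda>s t. log_energy (muhat c l f (2^s*m)) (muhat c l f (2^t*m))",
        OF q(1) lo(1,2) bounds]
    have "limit_energy < real Q * (\<tau> / 2)" using Q \<open>\<tau> / 2 > 0\<close> by (simp add: divide_less_eq)
    also have "\<dots> \<le> real (q m) * (\<tau> / 2)" using q \<open>\<tau> / 2 > 0\<close> by (intro mult_right_mono) auto
    finally have "limit_energy / real (q m) \<le> \<tau> / 2" using q by (simp add: pos_divide_le_eq mult.commute)
    moreover have "lo / real (q m) \<le> limit_energy / real (q m)" using lo q by (simp add: divide_right_mono)
    ultimately have "limit_energy - \<tau> \<le> lo - lo / real (q m)" unfolding lo_def by linarith
    then have "ennreal (limit_energy - \<tau>) \<le> ennreal (lo - lo / real (q m))" by (rule ennreal_leI)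
    moreover have "ennreal (limit_energy + \<tau> / 2) \<le> ennreal (limit_energy + \<tau>)"
      using \<open>\<tau> > 0\<close> by (intro ennreal_leI) simp
    ultimately show ?case using avg by (meson order_trans)
  qed
qed

lemma log_energy_f_phi_eq:
  "log_energy (density lborel (\<lambda>x. ennreal (f x * \<phi> x * indicator {0..1} x)))
      (density lborel (\<lambda>x. ennreal (f x * \<phi> x * indicator {0..1} x))) = energy_f_phi"
proof -
  have "density lborel (\<lambda>x. ennreal (f x * \<phi> x * indicator {0..1} x)) =
      density lborel (\<lambda>x. ennreal (phi0 x * f_ext x))"
  proof (rule density_cong)
    have "(\<lambda>x. indicator {0..1::real} x *\<^sub>R f x) \<in> borel_measurable borel"
      by (rule borel_measurable_continuous_on_indicator) (use f_cont in auto)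
    then have "(\<lambda>x. (indicator {0..1} x *\<^sub>R f x) * (indicator {0..1} x * \<phi> x)) \<in> borel_measurable lborel"
      using borel_measurable_indicator_phi by measurable
    moreover have "(\<lambda>x. (indicator {0..1} x *\<^sub>R f x) * (indicator {0..1} x * \<phi> x)) =
        (\<lambda>x. f x * \<phi> x * indicator {0..1} x)"
      by (auto simp: indicator_def fun_eq_iff mult_ac)
    ultimately show "(\<lambda>x. ennreal (f x * \<phi> x * indicator {0..1} x)) \<in> borel_measurable lborel" by simp
    show "AE x in lborel. ennreal (f x * \<phi> x * indicator {0..1} x) = ennreal (phi0 x * f_ext x)"
      using AE_phi0_eq by eventually_elim (auto simp: indicator_def f_ext_eq phi0_outside mult_ac split: if_splits)
  qed simp
  then have "log_energy (density lborel (\<lambda>x. ennreal (f x * \<phi> x * indicator {0..1} x)))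
      (density lborel (\<lambda>x. ennreal (f x * \<phi> x * indicator {0..1} x))) =
      (\<integral>\<^sup>+x. \<integral>\<^sup>+y. ennreal (phi0 x * f_ext x) * (ennreal (phi0 y * f_ext y) * ennreal (- ln \<bar>x - y\<bar>)) \<partial>lborel \<partial>lborel)"
    using phi0_nonneg f_ext_pos by (simp add: log_energy_density less_imp_le)
  also have "\<dots> = energy_f_phi"
    unfolding energy_f_phi_def
  proof (intro nn_integral_cong)
    fix x y
    have "0 \<le> phi0 x * f_ext x" "0 \<le> phi0 y * f_ext y"
      using phi0_nonneg f_ext_pos by (simp_all add: less_imp_le)
    then have "ennreal (phi0 x * f_ext x) * (ennreal (phi0 y * f_ext y) * ennreal (- ln \<bar>x - y\<bar>)) =
        ennreal (phi0 x * f_ext x * (phi0 y * f_ext y * - ln \<bar>x - y\<bar>))"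
      by (simp only: ennreal_mult')
    then show "ennreal (phi0 x * f_ext x) * (ennreal (phi0 y * f_ext y) * ennreal (- ln \<bar>x - y\<bar>)) =
        ennreal (phi0 x * phi0 y * (f_ext x * f_ext y * - ln \<bar>x - y\<bar>))"
      by (simp only: ac_simps)
  qed
  finally show ?thesis .
qed

lemma limit_energy_eq:
  "log_energy (density lborel (\<lambda>x. ennreal (f x * \<phi> x * indicator {0..1} x)))
      (density lborel (\<lambda>x. ennreal (f x * \<phi> x * indicator {0..1} x)))
    / ennreal ((LINT x:{0..1}|lborel. f x * \<phi> x)^2) = ennreal limit_energy"
  unfolding log_energy_f_phi_eq set_integral_f_phi_eq energy_f_phi_eq_ennreal limit_energy_def
  using f_phi_integral_pos energy_f_phi_real_nonneg by (simp add: divide_ennreal)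

end

theorem lemma4p12:
  fixes c l :: "nat \<Rightarrow> real" and \<phi> f :: "real \<Rightarrow> real" and q :: "nat \<Rightarrow> nat"
  assumes c_in: "\<forall>k\<ge>1. c k \<in> {0<..<1}"
    and l_pos: "\<forall>k\<ge>1. l k > 0"
    and l_decr: "\<forall>k\<ge>1. l (Suc k) \<le> l k"
    and l_lim: "l \<longlonglongrightarrow> 0"
    and A1_int: "set_integrable lborel {0..1} \<phi>"
    and A1_pos: "AE x in lborel. x \<in> {0..1} \<longrightarrow> \<phi> x > 0"
    and A1_lim: "\<forall>g. continuous_on {0..1} g \<longrightarrow>
        (\<lambda>n. (1 / real (card (blockA n))) * (\<Sum>k\<in>blockA n. g (c k)))
          \<longlonglongrightarrow> (LINT x:{0..1}|lborel. g x * \<phi> x)"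
    and q_lim: "filterlim q at_top sequentially"
    and A2: "\<forall>\<epsilon>>0. \<exists>\<delta>>0. \<forall>\<^sub>F n in sequentially. \<forall>a\<le>q n. \<forall>b\<le>q n.
        (1 / real (card (blockA (2^a*n) \<times> blockA (2^b*n)))) *
        (\<Sum>i\<in>blockA (2^a*n). \<Sum>j\<in>{j\<in>blockA (2^b*n). i \<noteq> j \<and> \<bar>c i - c j\<bar> < \<delta>}.
            - ln \<bar>c i - c j\<bar>) < \<epsilon>"
    and A3: "\<forall>\<epsilon>>0. \<forall>\<^sub>F n in sequentially. \<forall>i\<in>blockAq n (q n). \<forall>j\<in>blockAq n (q n).
        i \<noteq> j \<longrightarrow> l i + l j < \<epsilon> * (2 * \<bar>c i - c j\<bar>)"
    and f_cont: "continuous_on {0..1} f"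
    and f_pos: "\<forall>x\<in>{0..1}. f x > 0"
  shows "(\<lambda>m. (\<Sum>s\<in>{0..<q m}. \<Sum>t\<in>{0..<q m} - {s}.
            log_energy (muhat c l f (2^s*m)) (muhat c l f (2^t*m)))
          / ennreal ((real (card {0..<q m}))^2))
     \<longlonglongrightarrow> log_energy (density lborel (\<lambda>x. ennreal (f x * \<phi> x * indicator {0..1} x)))
                     (density lborel (\<lambda>x. ennreal (f x * \<phi> x * indicator {0..1} x)))
          / ennreal ((LINT x:{0..1}|lborel. f x * \<phi> x)^2)"
proof -
  interpret equidistributed_intervals c l \<phi> f q
    by (rule equidistributed_intervals.intro) fact+
  show ?thesis unfolding limit_energy_eq by (rule off_diagonal_average_log_energy_tendsto)
qed

end
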